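(* Let $N\ge 2$, let $a,b\in\mathbb{R}$, and let $M\in\mathbb{R}^{N\times N}$ be a real symmetric matrix with an orthonormal basis of eigenvectors $V_{\cdot,1},\dots,V_{\cdot,N}$ (where $V_{\cdot,k}=(V_{1,k},\dots,V_{N,k})^t$) and corresponding eigenvalues $\lambda_1=0$ and $\lambda_k<0$ for $k=2,\dots,N$. Consider the system $$\dot x_i = y_i + a x_i^2 + b x_i^3 + \sum_{j=1}^N M_{ij}x_j,\qquad \dot y_i=-x_i,\qquad i=1,\dots,N.$$ Then the origin is an equilibrium whose linearization has exactly one pair of purely imaginary eigenvalues $\pm i$, all other eigenvalues having negative real part, and the first Lyapunov coefficient $l_1(0)$ of the system restricted to the two-dimensional center manifold at the origin has the same sign as $$L=\frac{3}{8}\,b\sum_{\phi=1}^N V_{\phi,1}^4 \;+\; a^2\sum_{k=2}^N\Big(\sum_{\phi=1}^N V_{\phi,k}V_{\phi,1}^2\Big)^2\frac{-\lambda_k}{4\lambda_k^2+9}.$$ In particular, if $b<0$ (so that each uncoupled unit $\dot x=y+ax^2+bx^3,\ \dot y=-x$ is poised at a supercritical Andronov–Hopf bifurcation) and $D:=\sum_{k=2}^N\big(\sum_{\phi}V_{\phi,k}V_{\phi,1}^2\big)^2\frac{-\lambda_k}{4\lambda_k^2+9}>0$, then $l_1(0)>0$ (subcritical) if $|a|>\gamma\sqrt{-b}$ and $l_1(0)<0$ (supercritical) if $|a|<\gamma\sqrt{-b}$, where $\gamma=\sqrt{\tfrac{3}{8}\sum_{\phi}V_{\phi,1}^4\big/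 D}$; while if $b>0$ then $l_1(0)>0$ for every $a$.
   Context: For a planar system $\dot x = y + f(x,y)$, $\dot y = -x + g(x,y)$ with $f,g$ containing only terms of order $\ge 2$, the first Lyapunov coefficient is $l_1(0)=\frac{1}{16}(f_{xxx}+f_{xyy}+g_{xxy}+g_{yyy})+\frac{1}{16}\big(f_{xy}(f_{xx}+f_{yy})-g_{xy}(g_{xx}+g_{yy})-f_{xx}g_{xx}+f_{yy}g_{yy}\big)$, partial derivatives evaluated at $0$. The center-manifold restriction is written in the coordinates $u=\sum_\phi V_{\phi,1}x_\phi$, $p=\sum_\phi V_{\phi,1}y_\phi$, in which its linear part is $\dot u=p$, $\dot p=-u$. When the leading eigenvalue of the coupling matrix is used as a bifurcation parameter crossing $0$, the resulting Andronov–Hopf bifurcation is called subcritical if $l_1(0)>0$ and supercritical if $l_1(0)<0$. *)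

theory Defs
  imports "HOL-Analysis.Analysis" "HOL-Computational_Algebra.Polynomial"
begin

definition charpoly :: "real^'m^'m \<Rightarrow> complex poly" where
  "charpoly A = det (\<chi> i j. (if i = j then [:0, 1:] else 0) - [:complex_of_real (A $ i $ j):])"

definition pd1 :: "(real \<times> real \<Rightarrow> 'a::real_normed_vector) \<Rightarrow> real \<times> real \<Rightarrow> 'a" where
  "pd1 f w = vector_derivative (\<lambda>s. f (s, snd w)) (at (fst w))"

definition pd2 :: "(real \<times> real \<Rightarrow> 'a::real_normed_vector) \<Rightarrow> real \<times> real \<Rightarrow> 'a" where
  "pd2 f w = vector_derivative (\<lambda>t. f (fst w, t)) (at (snd w))"

fun Ck :: "nat \<Rightarrow> (real \<times> real) set \<Rightarrow> (real \<times> real \<Rightarrow> 'a::real_normed_vector) \<Rightarrow> bool" where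
  "Ck 0 S f = continuous_on S f"
| "Ck (Suc k) S f =
     ((\<forall>w\<in>S. (\<lambda>s. f (s, snd w)) differentiable (at (fst w))
            \<and> (\<lambda>t. f (fst w, t)) differentiable (at (snd w)))
      \<and> continuous_on S f \<and> Ck k S (pd1 f) \<and> Ck k S (pd2 f))"

section \<open>First Lyapunov coefficient of a planar system x' = y + f, y' = -x + g\<close>

definition lyap1 :: "(real \<times> real \<Rightarrow> real) \<Rightarrow> (real \<times> real \<Rightarrow> real) \<Rightarrow> real" where
  "lyap1 f g =
    (let f_xxx = pd1 (pd1 (pd1 f)) (0,0); f_xyy = pd1 (pd2 (pd2 f)) (0,0);
         g_xxy = pd1 (pd1 (pd2 g)) (0,0); g_yyy = pd2 (pd2 (pd2 g)) (0,0);
         f_xy = pd1 (pd2 f) (0,0); f_xx = pd1 (pd1 f) (0,0); f_yy = pd2 (pd2 f) (0,0);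
         g_xy = pd1 (pd2 g) (0,0); g_xx = pd1 (pd1 g) (0,0); g_yy = pd2 (pd2 g) (0,0)
     in (1/16) * (f_xxx + f_xyy + g_xxy + g_yyy)
        + (1/16) * (f_xy * (f_xx + f_yy) - g_xy * (g_xx + g_yy) - f_xx * g_xx + f_yy * g_yy))"

text \<open>
  Phi : S -> state space parametrises a C^3 surface through 0 which is a graph over the
  center eigenspace spanned by e1, e2: the center coordinates (cu, cp) of Phi(u,p) are (u,p),
  Phi(0,0) = 0 and the derivative of Phi at 0 maps onto the center eigenspace (so the
  stable-direction part h has h(0) = 0, Dh(0) = 0). Invariance: the vector field F is tangent
  to the surface; the tangent vector is then necessarily the reduced field
  (cu (F (Phi w)), cp (F (Phi w))).
\<close>
definition local_center_manifold ::
  "('m::real_normed_vector \<Rightarrow> 'm) \<Rightarrow> ('m \<Rightarrow> real) \<Rightarrow> ('m \<Rightarrow> real) \<Rightarrow> 'm \<Rightarrow> 'm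
     \<Rightarrow> (real \<times> real) set \<Rightarrow> (real \<times> real \<Rightarrow> 'm) \<Rightarrow> bool" where
  "local_center_manifold F cu cp e1 e2 S Phi \<longleftrightarrow>
     open S \<and> (0,0) \<in> S \<and> Phi (0,0) = 0 \<and>
     (\<forall>w\<in>S. cu (Phi w) = fst w \<and> cp (Phi w) = snd w) \<and>
     pd1 Phi (0,0) = e1 \<and> pd2 Phi (0,0) = e2 \<and>
     Ck 3 S Phi \<and>
     (\<forall>w\<in>S. F (Phi w) = cu (F (Phi w)) *\<^sub>R pd1 Phi w + cp (F (Phi w)) *\<^sub>R pd2 Phi w)"

text \<open>State z in R^(2N): z \$ Inl i = x_i, z \$ Inr i = y_i.\<close>
definition coupled_field :: "real \<Rightarrow> real \<Rightarrow> real^'n^'n \<Rightarrow> real^('n + 'n) \<Rightarrow> real^('n + 'n)" where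
  "coupled_field a b M z = (\<chi> s. case s of
      Inl i \<Rightarrow> z $ Inr i + a * (z $ Inl i)^2 + b * (z $ Inl i)^3 + (\<Sum>j\<in>UNIV. M $ i $ j * z $ Inl j)
    | Inr i \<Rightarrow> - z $ Inl i)"

definition coord_u :: "real^'n^'n \<Rightarrow> 'n \<Rightarrow> real^('n + 'n) \<Rightarrow> real" where
  "coord_u V k0 z = (\<Sum>\<phi>\<in>UNIV. V $ \<phi> $ k0 * z $ Inl \<phi>)"

definition coord_p :: "real^'n^'n \<Rightarrow> 'n \<Rightarrow> real^('n + 'n) \<Rightarrow> real" where
  "coord_p V k0 z = (\<Sum>\<phi>\<in>UNIV. V $ \<phi> $ k0 * z $ Inr \<phi>)"

definition center_e1 :: "real^'n^'n \<Rightarrow> 'n \<Rightarrow> real^('n + 'n)" where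
  "center_e1 V k0 = (\<chi> s. case s of Inl \<phi> \<Rightarrow> V $ \<phi> $ k0 | Inr \<phi> \<Rightarrow> 0)"

definition center_e2 :: "real^'n^'n \<Rightarrow> 'n \<Rightarrow> real^('n + 'n)" where
  "center_e2 V k0 = (\<chi> s. case s of Inl \<phi> \<Rightarrow> 0 | Inr \<phi> \<Rightarrow> V $ \<phi> $ k0)"

text \<open>Nonlinear parts f, g of the restricted system u' = p + f(u,p), p' = -u + g(u,p).\<close>
definition restr_f :: "real \<Rightarrow> real \<Rightarrow> real^'n^'n \<Rightarrow> real^'n^'n \<Rightarrow> 'n \<Rightarrow> (real \<times> real \<Rightarrow> real^('n + 'n)) \<Rightarrow> real \<times> real \<Rightarrow> real" where
  "restr_f a b M V k0 Phi w = coord_u V k0 (coupled_field a b M (Phi w)) - snd w"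

definition restr_g :: "real \<Rightarrow> real \<Rightarrow> real^'n^'n \<Rightarrow> real^'n^'n \<Rightarrow> 'n \<Rightarrow> (real \<times> real \<Rightarrow> real^('n + 'n)) \<Rightarrow> real \<times> real \<Rightarrow> real" where
  "restr_g a b M V k0 Phi w = coord_p V k0 (coupled_field a b M (Phi w)) + fst w"

end

theory Submission
  imports Defs
begin

text \<open>
  In the orthonormal eigenbasis V the linearisation splits into the planar blocks
  c' = d + \<lambda>_k c, d' = -c with characteristic polynomials \<mu>^2 - \<lambda>_k \<mu> + 1: the block with
  \<lambda>_k0 = 0 gives the simple eigenvalues \<plusminus>i, the blocks with \<lambda>_k < 0 lie in the open left
  half plane.

  On a center manifold, parametrised by the center coordinates (u, p), the reduced field is
  u' = p + a G_2 + b G_3, p' = -u with G_m = \<Sum>_\<phi> V_\<phi>k0 x_\<phi>^m. Hence g = 0, f has no mixed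
  second derivative at the origin, and l_1 = (f_uuu + f_upp) / 16. The cubic term contributes
  3/8 b \<Sum>_\<phi> V_\<phi>k0^4 directly. The quadratic term contributes through the second-order Taylor
  coefficients of the stable modes c_k, which the invariance equation determines:
  (c_k)_uu = -(c_k)_pp = -4 \<lambda>_k a s_k / (4 \<lambda>_k^2 + 9) with s_k = \<Sum>_\<phi> V_\<phi>k V_\<phi>k0^2.
\<close>

section \<open>Partial derivatives on an open set\<close>

definition partially_differentiable_at :: "(real \<times> real \<Rightarrow> 'a::real_normed_vector) \<Rightarrow> real \<times> real \<Rightarrow> bool" where
  "partially_differentiable_at f w \<longleftrightarrow>
     (\<lambda>s. f (s, snd w)) differentiable (at (fst w)) \<and> (\<lambda>t. f (fst w, t)) differentiable (at (snd w))"

declare Ck.simps(2)[simp del]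

lemma Ck_Suc_iff:
  "Ck (Suc k) S f \<longleftrightarrow> (\<forall>w\<in>S. partially_differentiable_at f w) \<and> continuous_on S f
     \<and> Ck k S (pd1 f) \<and> Ck k S (pd2 f)"
  by (simp add: Ck.simps(2) partially_differentiable_at_def)

lemma Ck_imp_partially_differentiable_at: "Ck (Suc k) S f \<Longrightarrow> w \<in> S \<Longrightarrow> partially_differentiable_at f w"
  by (simp add: Ck_Suc_iff)

lemma Ck_Suc_imp_Ck: "Ck (Suc k) S f \<Longrightarrow> Ck k S f"
proof (induction k arbitrary: f)
  case 0
  then show ?case unfolding Ck_Suc_iff by simp
next
  case (Suc k)
  then have "Ck (Suc k) S (pd1 f)" "Ck (Suc k) S (pd2 f)"
    unfolding Ck_Suc_iff[of "Suc k"] by blast+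
  then have "Ck k S (pd1 f)" "Ck k S (pd2 f)"
    using Suc.IH by blast+
  then show ?case
    using Suc.prems unfolding Ck_Suc_iff[of "Suc k"] Ck_Suc_iff[of k] by blast
qed

lemma Ck_le: "Ck m S f \<Longrightarrow> k \<le> m \<Longrightarrow> Ck k S f"
proof (induction m)
  case (Suc m)
  then show ?case using Ck_Suc_imp_Ck le_Suc_eq by blast
qed simp

lemma open_slice_fst: "open S \<Longrightarrow> open {s. (s, t) \<in> S}"
  using open_vimage[of S "\<lambda>s. (s, t)"] by (simp add: vimage_def continuous_on_Pair)

lemma open_slice_snd: "open S \<Longrightarrow> open {t. (s, t) \<in> S}"
  using open_vimage[of S "\<lambda>t. (s, t)"] by (simp add: vimage_def continuous_on_Pair)

lemma differentiable_cong_open: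
  fixes f g :: "real \<Rightarrow> 'a::real_normed_vector"
  assumes "open T" "x \<in> T" "\<And>y. y \<in> T \<Longrightarrow> f y = g y" "f differentiable (at x)"
  shows "g differentiable (at x)"
  using assms has_derivative_transform_within_open unfolding differentiable_def by metis

lemma vector_derivative_cong_open:
  fixes f g :: "real \<Rightarrow> 'a::real_normed_vector"
  assumes "open T" "x \<in> T" "\<And>y. y \<in> T \<Longrightarrow> f y = g y"
  shows "vector_derivative f (at x) = vector_derivative g (at x)"
  using assms eventually_nhds_in_open[OF assms(1,2)]
  by (intro vector_derivative_cong_eq) (auto elim: eventually_mono)

lemma pd1_cong_open:
  assumes "open S" "w \<in> S" "\<And>v. v \<in> S \<Longrightarrow> f v = g v"
  shows "pd1 f w = pd1 g w"
  unfolding pd1_def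
  by (rule vector_derivative_cong_open[OF open_slice_fst[OF assms(1)]]) (use assms in auto)

lemma pd2_cong_open:
  assumes "open S" "w \<in> S" "\<And>v. v \<in> S \<Longrightarrow> f v = g v"
  shows "pd2 f w = pd2 g w"
  unfolding pd2_def
  by (rule vector_derivative_cong_open[OF open_slice_snd[OF assms(1)]]) (use assms in auto)

lemma partially_differentiable_at_cong_open:
  assumes "open S" "w \<in> S" "\<And>v. v \<in> S \<Longrightarrow> f v = g v" "partially_differentiable_at f w"
  shows "partially_differentiable_at g w"
proof -
  have "(\<lambda>s. g (s, snd w)) differentiable (at (fst w))"
    by (rule differentiable_cong_open[OF open_slice_fst[OF assms(1)], where f = "\<lambda>s. f (s, snd w)"])
       (use assms in \<open>auto simp: partially_differentiable_at_def\<close>)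
  moreover have "(\<lambda>t. g (fst w, t)) differentiable (at (snd w))"
    by (rule differentiable_cong_open[OF open_slice_snd[OF assms(1)], where f = "\<lambda>t. f (fst w, t)"])
       (use assms in \<open>auto simp: partially_differentiable_at_def\<close>)
  ultimately show ?thesis by (simp add: partially_differentiable_at_def)
qed

lemma Ck_cong_open:
  fixes f g :: "real \<times> real \<Rightarrow> 'a::real_normed_vector"
  assumes S: "open S" and eq: "\<And>v. v \<in> S \<Longrightarrow> f v = g v" and f: "Ck k S f"
  shows "Ck k S g"
  using eq f
proof (induction k arbitrary: f g)
  case 0
  then show ?case using continuous_on_eq by (auto simp: Ck.simps(1))
next
  case (Suc k)
  have "\<forall>w\<in>S. partially_differentiable_at g w"
    using Suc.prems partially_differentiable_at_cong_open[OF S] unfolding Ck_Suc_iff by blast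
  moreover have "continuous_on S g"
    using Suc.prems continuous_on_eq unfolding Ck_Suc_iff by blast
  moreover have "Ck k S (pd1 g)"
  proof (rule Suc.IH)
    show "Ck k S (pd1 f)" using Suc.prems(2) unfolding Ck_Suc_iff by blast
    show "pd1 f v = pd1 g v" if "v \<in> S" for v
      by (rule pd1_cong_open[OF S that Suc.prems(1)])
  qed
  moreover have "Ck k S (pd2 g)"
  proof (rule Suc.IH)
    show "Ck k S (pd2 f)" using Suc.prems(2) unfolding Ck_Suc_iff by blast
    show "pd2 f v = pd2 g v" if "v \<in> S" for v
      by (rule pd2_cong_open[OF S that Suc.prems(1)])
  qed
  ultimately show ?case unfolding Ck_Suc_iff by blast
qed

text \<open>
  Extended by 0 outside S, partial derivatives depend only on the values on the open set S, so
  the differentiation rules below become equations between functions that the simplifier can chain.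
\<close>
definition pd1_on :: "(real \<times> real) set \<Rightarrow> (real \<times> real \<Rightarrow> real) \<Rightarrow> real \<times> real \<Rightarrow> real" where
  "pd1_on S f w = (if w \<in> S then pd1 f w else 0)"

definition pd2_on :: "(real \<times> real) set \<Rightarrow> (real \<times> real \<Rightarrow> real) \<Rightarrow> real \<times> real \<Rightarrow> real" where
  "pd2_on S f w = (if w \<in> S then pd2 f w else 0)"

lemma pd1_eq_pd1_on:
  assumes "open S" "\<forall>v\<in>S. f v = g v"
  shows "\<forall>v\<in>S. pd1 f v = pd1_on S g v"
proof
  fix v assume "v \<in> S"
  then show "pd1 f v = pd1_on S g v"
    using pd1_cong_open[OF assms(1) \<open>v \<in> S\<close>, of f g] assms(2) by (simp add: pd1_on_def)
qed

lemma pd2_eq_pd2_on: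
  assumes "open S" "\<forall>v\<in>S. f v = g v"
  shows "\<forall>v\<in>S. pd2 f v = pd2_on S g v"
proof
  fix v assume "v \<in> S"
  then show "pd2 f v = pd2_on S g v"
    using pd2_cong_open[OF assms(1) \<open>v \<in> S\<close>, of f g] assms(2) by (simp add: pd2_on_def)
qed

lemma pd1_on_cong:
  assumes "open S" "\<And>v. v \<in> S \<Longrightarrow> f v = g v"
  shows "pd1_on S f = pd1_on S g"
  by (auto simp: pd1_on_def fun_eq_iff intro: pd1_cong_open[OF assms(1) _ assms(2)])

lemma pd2_on_cong:
  assumes "open S" "\<And>v. v \<in> S \<Longrightarrow> f v = g v"
  shows "pd2_on S f = pd2_on S g"
  by (auto simp: pd2_on_def fun_eq_iff intro: pd2_cong_open[OF assms(1) _ assms(2)])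

lemma Ck_Suc_iff_on:
  assumes S: "open S"
  shows "Ck (Suc k) S f \<longleftrightarrow> (\<forall>w\<in>S. partially_differentiable_at f w) \<and> continuous_on S f
     \<and> Ck k S (pd1_on S f) \<and> Ck k S (pd2_on S f)"
proof -
  have "Ck k S (pd1 f) \<longleftrightarrow> Ck k S (pd1_on S f)" "Ck k S (pd2 f) \<longleftrightarrow> Ck k S (pd2_on S f)"
    using Ck_cong_open[OF S, of _ _ k] by (metis pd1_on_def, metis pd2_on_def)
  then show ?thesis by (simp add: Ck_Suc_iff)
qed

lemma pd1_add:
  "partially_differentiable_at f w \<Longrightarrow> partially_differentiable_at g w \<Longrightarrow>
   pd1 (\<lambda>w. f w + g w) w = pd1 f w + pd1 g w"
  unfolding partially_differentiable_at_def pd1_def by simp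

lemma pd2_add:
  "partially_differentiable_at f w \<Longrightarrow> partially_differentiable_at g w \<Longrightarrow>
   pd2 (\<lambda>w. f w + g w) w = pd2 f w + pd2 g w"
  unfolding partially_differentiable_at_def pd2_def by simp

lemma pd1_diff:
  "partially_differentiable_at f w \<Longrightarrow> partially_differentiable_at g w \<Longrightarrow>
   pd1 (\<lambda>w. f w - g w) w = pd1 f w - pd1 g w"
  unfolding partially_differentiable_at_def pd1_def by simp

lemma pd2_diff:
  "partially_differentiable_at f w \<Longrightarrow> partially_differentiable_at g w \<Longrightarrow>
   pd2 (\<lambda>w. f w - g w) w = pd2 f w - pd2 g w"
  unfolding partially_differentiable_at_def pd2_def by simp

lemma pd1_mult:
  fixes f g :: "real \<times> real \<Rightarrow> real"
  shows "partially_differentiable_at f w \<Longrightarrow> partially_differentiable_at g w \<Longrightarrow>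
   pd1 (\<lambda>w. f w * g w) w = pd1 f w * g w + f w * pd1 g w"
  unfolding partially_differentiable_at_def pd1_def by simp

lemma pd2_mult:
  fixes f g :: "real \<times> real \<Rightarrow> real"
  shows "partially_differentiable_at f w \<Longrightarrow> partially_differentiable_at g w \<Longrightarrow>
   pd2 (\<lambda>w. f w * g w) w = pd2 f w * g w + f w * pd2 g w"
  unfolding partially_differentiable_at_def pd2_def by simp

lemma pd1_sum:
  fixes h :: "'i \<Rightarrow> real \<times> real \<Rightarrow> real"
  assumes "\<And>i. i \<in> A \<Longrightarrow> partially_differentiable_at (h i) w"
  shows "pd1 (\<lambda>w. \<Sum>i\<in>A. h i w) w = (\<Sum>i\<in>A. pd1 (h i) w)"
  unfolding pd1_def using assms
  by (intro vector_derivative_at has_vector_derivative_sum)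
     (auto simp: partially_differentiable_at_def vector_derivative_works)

lemma pd2_sum:
  fixes h :: "'i \<Rightarrow> real \<times> real \<Rightarrow> real"
  assumes "\<And>i. i \<in> A \<Longrightarrow> partially_differentiable_at (h i) w"
  shows "pd2 (\<lambda>w. \<Sum>i\<in>A. h i w) w = (\<Sum>i\<in>A. pd2 (h i) w)"
  unfolding pd2_def using assms
  by (intro vector_derivative_at has_vector_derivative_sum)
     (auto simp: partially_differentiable_at_def vector_derivative_works)

lemma has_vector_derivative_vec_nth:
  fixes g :: "real \<Rightarrow> real^'m"
  assumes "g differentiable (at x)"
  shows "((\<lambda>s. g s $ i) has_vector_derivative vector_derivative g (at x) $ i) (at x)"
  using assms vector_derivative_works
  by (blast intro: bounded_linear.has_vector_derivative[OF bounded_linear_vec_nth])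

lemma pd1_vec_nth:
  fixes f :: "real \<times> real \<Rightarrow> real^'m"
  shows "partially_differentiable_at f w \<Longrightarrow> pd1 (\<lambda>w. f w $ i) w = pd1 f w $ i"
  unfolding partially_differentiable_at_def pd1_def
  by (intro vector_derivative_at has_vector_derivative_vec_nth) simp

lemma pd2_vec_nth:
  fixes f :: "real \<times> real \<Rightarrow> real^'m"
  shows "partially_differentiable_at f w \<Longrightarrow> pd2 (\<lambda>w. f w $ i) w = pd2 f w $ i"
  unfolding partially_differentiable_at_def pd2_def
  by (intro vector_derivative_at has_vector_derivative_vec_nth) simp

lemma partially_differentiable_at_vec_nth:
  fixes f :: "real \<times> real \<Rightarrow> real^'m"
  shows "partially_differentiable_at f w \<Longrightarrow> partially_differentiable_at (\<lambda>w. f w $ i) w"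
  unfolding partially_differentiable_at_def
  using has_vector_derivative_vec_nth differentiable_def has_vector_derivative_def by metis

lemma partially_differentiable_at_add:
  "partially_differentiable_at f w \<Longrightarrow> partially_differentiable_at g w \<Longrightarrow>
   partially_differentiable_at (\<lambda>w. f w + g w) w"
  by (simp add: partially_differentiable_at_def)

lemma partially_differentiable_at_mult:
  fixes f g :: "real \<times> real \<Rightarrow> real"
  shows "partially_differentiable_at f w \<Longrightarrow> partially_differentiable_at g w \<Longrightarrow>
   partially_differentiable_at (\<lambda>w. f w * g w) w"
  by (simp add: partially_differentiable_at_def)

lemma pd1_const: "pd1 (\<lambda>w. c) = (\<lambda>w. 0)"
  by (simp add: pd1_def fun_eq_iff)

lemma pd2_const: "pd2 (\<lambda>w. c) = (\<lambda>w. 0)"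
  by (simp add: pd2_def fun_eq_iff)

lemma pd1_fst: "pd1 fst = (\<lambda>w. 1 :: real)"
  by (simp add: pd1_def fun_eq_iff)

lemma pd2_fst: "pd2 fst = (\<lambda>w. 0 :: real)"
  by (simp add: pd2_def fun_eq_iff)

lemma pd1_snd: "pd1 snd = (\<lambda>w. 0 :: real)"
  by (simp add: pd1_def fun_eq_iff)

lemma pd2_snd: "pd2 snd = (\<lambda>w. 1 :: real)"
  by (simp add: pd2_def fun_eq_iff)

lemma pd1_on_const [simp]: "pd1_on S (\<lambda>w. c) = (\<lambda>w. 0)"
  by (simp add: pd1_on_def pd1_def fun_eq_iff)

lemma pd2_on_const [simp]: "pd2_on S (\<lambda>w. c) = (\<lambda>w. 0)"
  by (simp add: pd2_on_def pd2_def fun_eq_iff)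

lemma pd1_on_fst [simp]: "pd1_on S fst = (\<lambda>w. if w \<in> S then 1 else 0)"
  by (simp add: pd1_on_def pd1_def fun_eq_iff)

lemma pd2_on_fst [simp]: "pd2_on S fst = (\<lambda>w. 0)"
  by (simp add: pd2_on_def pd2_def fun_eq_iff)

lemma pd1_on_snd [simp]: "pd1_on S snd = (\<lambda>w. 0)"
  by (simp add: pd1_on_def pd1_def fun_eq_iff)

lemma pd2_on_snd [simp]: "pd2_on S snd = (\<lambda>w. if w \<in> S then 1 else 0)"
  by (simp add: pd2_on_def pd2_def fun_eq_iff)

lemma pd1_on_indicator: "open S \<Longrightarrow> pd1_on S (\<lambda>w. if w \<in> S then c else 0) = (\<lambda>w. 0)"
  using pd1_on_cong[of S "\<lambda>w. if w \<in> S then c else 0" "\<lambda>w. c"] by simp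

lemma pd2_on_indicator: "open S \<Longrightarrow> pd2_on S (\<lambda>w. if w \<in> S then c else 0) = (\<lambda>w. 0)"
  using pd2_on_cong[of S "\<lambda>w. if w \<in> S then c else 0" "\<lambda>w. c"] by simp

lemma Ck1_imp_partially_differentiable_at: "Ck 1 S f \<Longrightarrow> w \<in> S \<Longrightarrow> partially_differentiable_at f w"
  using Ck_imp_partially_differentiable_at[of 0] by simp

lemma pd1_on_add:
  "Ck 1 S f \<Longrightarrow> Ck 1 S g \<Longrightarrow> pd1_on S (\<lambda>w. f w + g w) = (\<lambda>w. pd1_on S f w + pd1_on S g w)"
  by (auto simp: pd1_on_def pd1_add Ck1_imp_partially_differentiable_at)

lemma pd2_on_add:
  "Ck 1 S f \<Longrightarrow> Ck 1 S g \<Longrightarrow> pd2_on S (\<lambda>w. f w + g w) = (\<lambda>w. pd2_on S f w + pd2_on S g w)"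
  by (auto simp: pd2_on_def pd2_add Ck1_imp_partially_differentiable_at)

lemma pd1_on_mult:
  "Ck 1 S f \<Longrightarrow> Ck 1 S g \<Longrightarrow> pd1_on S (\<lambda>w. f w * g w) = (\<lambda>w. pd1_on S f w * g w + f w * pd1_on S g w)"
  by (auto simp: pd1_on_def pd1_mult Ck1_imp_partially_differentiable_at)

lemma pd2_on_mult:
  "Ck 1 S f \<Longrightarrow> Ck 1 S g \<Longrightarrow> pd2_on S (\<lambda>w. f w * g w) = (\<lambda>w. pd2_on S f w * g w + f w * pd2_on S g w)"
  by (auto simp: pd2_on_def pd2_mult Ck1_imp_partially_differentiable_at)

lemma pd1_on_diff:
  "Ck 1 S f \<Longrightarrow> Ck 1 S g \<Longrightarrow> pd1_on S (\<lambda>w. f w - g w) = (\<lambda>w. pd1_on S f w - pd1_on S g w)"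
  by (auto simp: pd1_on_def pd1_diff Ck1_imp_partially_differentiable_at)

lemma pd2_on_diff:
  "Ck 1 S f \<Longrightarrow> Ck 1 S g \<Longrightarrow> pd2_on S (\<lambda>w. f w - g w) = (\<lambda>w. pd2_on S f w - pd2_on S g w)"
  by (auto simp: pd2_on_def pd2_diff Ck1_imp_partially_differentiable_at)

lemma pd1_on_sum:
  "(\<And>i. i \<in> A \<Longrightarrow> Ck 1 S (h i)) \<Longrightarrow> pd1_on S (\<lambda>w. \<Sum>i\<in>A. h i w) = (\<lambda>w. \<Sum>i\<in>A. pd1_on S (h i) w)"
  by (auto simp: pd1_on_def fun_eq_iff intro!: pd1_sum Ck1_imp_partially_differentiable_at)

lemma pd2_on_sum:
  "(\<And>i. i \<in> A \<Longrightarrow> Ck 1 S (h i)) \<Longrightarrow> pd2_on S (\<lambda>w. \<Sum>i\<in>A. h i w) = (\<lambda>w. \<Sum>i\<in>A. pd2_on S (h i) w)"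
  by (auto simp: pd2_on_def fun_eq_iff intro!: pd2_sum Ck1_imp_partially_differentiable_at)

lemma Ck_const: "Ck k S (\<lambda>w. c)"
  by (induction k arbitrary: c)
     (simp_all add: Ck.simps(1) Ck_Suc_iff partially_differentiable_at_def pd1_const pd2_const)

lemma pd1_on_uminus: "Ck 1 S f \<Longrightarrow> pd1_on S (\<lambda>w. - f w) = (\<lambda>w. - pd1_on S f w)"
  using pd1_on_diff[of S "\<lambda>w. 0" f] by (simp add: Ck_const)

lemma pd2_on_uminus: "Ck 1 S f \<Longrightarrow> pd2_on S (\<lambda>w. - f w) = (\<lambda>w. - pd2_on S f w)"
  using pd2_on_diff[of S "\<lambda>w. 0" f] by (simp add: Ck_const)

lemma Ck_fst: "Ck k S fst"
  by (cases k) (simp_all add: Ck.simps(1) Ck_Suc_iff partially_differentiable_at_def pd1_fst pd2_fst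
      Ck_const continuous_on_fst)

lemma Ck_snd: "Ck k S snd"
  by (cases k) (simp_all add: Ck.simps(1) Ck_Suc_iff partially_differentiable_at_def pd1_snd pd2_snd
      Ck_const continuous_on_snd)

lemma Ck_indicator: "open S \<Longrightarrow> Ck k S (\<lambda>w. if w \<in> S then c else 0)"
  by (rule Ck_cong_open[OF _ _ Ck_const]) auto

lemma Ck_add:
  fixes f g :: "real \<times> real \<Rightarrow> real"
  assumes S: "open S"
  shows "Ck k S f \<Longrightarrow> Ck k S g \<Longrightarrow> Ck k S (\<lambda>w. f w + g w)"
proof (induction k arbitrary: f g)
  case 0
  then show ?case by (simp add: Ck.simps(1) continuous_on_add)
next
  case (Suc k)
  then have "Ck 1 S f" "Ck 1 S g" by (simp_all add: Ck_le)
  then have "pd1_on S (\<lambda>w. f w + g w) = (\<lambda>w. pd1_on S f w + pd1_on S g w)"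
    "pd2_on S (\<lambda>w. f w + g w) = (\<lambda>w. pd2_on S f w + pd2_on S g w)"
    by (simp_all add: pd1_on_add pd2_on_add)
  with Suc show ?case
    by (simp add: Ck_Suc_iff_on[OF S] partially_differentiable_at_add continuous_on_add)
qed

lemma Ck_mult:
  fixes f g :: "real \<times> real \<Rightarrow> real"
  assumes S: "open S"
  shows "Ck k S f \<Longrightarrow> Ck k S g \<Longrightarrow> Ck k S (\<lambda>w. f w * g w)"
proof (induction k arbitrary: f g)
  case 0
  then show ?case by (simp add: Ck.simps(1) continuous_on_mult)
next
  case (Suc k)
  then have "Ck 1 S f" "Ck 1 S g" "Ck k S f" "Ck k S g" by (simp_all add: Ck_le)
  then have "pd1_on S (\<lambda>w. f w * g w) = (\<lambda>w. pd1_on S f w * g w + f w * pd1_on S g w)"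
    "pd2_on S (\<lambda>w. f w * g w) = (\<lambda>w. pd2_on S f w * g w + f w * pd2_on S g w)"
    by (simp_all add: pd1_on_mult pd2_on_mult)
  with Suc \<open>Ck k S f\<close> \<open>Ck k S g\<close> show ?case
    by (simp add: Ck_Suc_iff_on[OF S] Ck_add[OF S] partially_differentiable_at_mult continuous_on_mult)
qed

lemma Ck_diff:
  fixes f g :: "real \<times> real \<Rightarrow> real"
  assumes S: "open S"
  shows "Ck k S f \<Longrightarrow> Ck k S g \<Longrightarrow> Ck k S (\<lambda>w. f w - g w)"
  using Ck_add[OF S, of k f "\<lambda>w. (- 1) * g w"] Ck_mult[OF S, of k "\<lambda>w. - 1" g] by (simp add: Ck_const)

lemma Ck_uminus:
  fixes f :: "real \<times> real \<Rightarrow> real"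
  shows "open S \<Longrightarrow> Ck k S f \<Longrightarrow> Ck k S (\<lambda>w. - f w)"
  using Ck_diff[of S k "\<lambda>w. 0" f] by (simp add: Ck_const)

lemma Ck_sum:
  fixes h :: "'i \<Rightarrow> real \<times> real \<Rightarrow> real"
  assumes "open S" "finite A"
  shows "(\<And>i. i \<in> A \<Longrightarrow> Ck k S (h i)) \<Longrightarrow> Ck k S (\<lambda>w. \<Sum>i\<in>A. h i w)"
  using assms(2) by (induction A rule: finite_induct) (simp_all add: Ck_const Ck_add[OF assms(1)])

lemma Ck_vec_nth:
  fixes f :: "real \<times> real \<Rightarrow> real^'m"
  assumes S: "open S"
  shows "Ck k S f \<Longrightarrow> Ck k S (\<lambda>w. f w $ i)"
proof (induction k arbitrary: f)
  case 0
  then show ?case unfolding Ck.simps(1) by (intro continuous_intros)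
next
  case (Suc k)
  have "Ck k S (pd1 (\<lambda>w. f w $ i))"
    using Suc Ck_cong_open[OF S, of "\<lambda>w. pd1 f w $ i" "pd1 (\<lambda>w. f w $ i)" k] pd1_vec_nth
    unfolding Ck_Suc_iff by metis
  moreover have "Ck k S (pd2 (\<lambda>w. f w $ i))"
    using Suc Ck_cong_open[OF S, of "\<lambda>w. pd2 f w $ i" "pd2 (\<lambda>w. f w $ i)" k] pd2_vec_nth
    unfolding Ck_Suc_iff by metis
  ultimately show ?case
    using Suc.prems partially_differentiable_at_vec_nth continuous_on_component
    unfolding Ck_Suc_iff by blast
qed

lemma Ck_pd1_on: "open S \<Longrightarrow> Ck (Suc k) S f \<Longrightarrow> Ck k S (pd1_on S f)"
  by (simp add: Ck_Suc_iff_on)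

lemma Ck_pd2_on: "open S \<Longrightarrow> Ck (Suc k) S f \<Longrightarrow> Ck k S (pd2_on S f)"
  by (simp add: Ck_Suc_iff_on)

lemmas pd_on_rules = pd1_on_add pd2_on_add pd1_on_diff pd2_on_diff pd1_on_mult pd2_on_mult
  pd1_on_uminus pd2_on_uminus pd1_on_sum pd2_on_sum pd1_on_indicator pd2_on_indicator

lemmas Ck_rules = Ck_const Ck_fst Ck_snd Ck_indicator Ck_add Ck_diff Ck_mult Ck_uminus Ck_sum
  Ck_pd1_on Ck_pd2_on

section \<open>Orthonormal eigenbases\<close>

lemma if_zero_mult: "(if P then a else 0) * b = (if P then a * b else (0::'a::mult_zero))"
  by simp

lemma mult_if_zero: "b * (if P then a else 0) = (if P then b * a else (0::'a::mult_zero))"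
  by simp

lemma orthonormal_columns:
  fixes V :: "real^'n^'n"
  assumes "transpose V ** V = mat 1"
  shows "(\<Sum>\<phi>\<in>UNIV. V $ \<phi> $ \<kappa> * V $ \<phi> $ \<mu>) = (if \<kappa> = \<mu> then 1 else 0)"
proof -
  have "(transpose V ** V) $ \<kappa> $ \<mu> = (\<Sum>\<phi>\<in>UNIV. V $ \<phi> $ \<kappa> * V $ \<phi> $ \<mu>)"
    by (simp add: matrix_matrix_mult_def transpose_def)
  then show ?thesis using assms by (simp add: mat_def)
qed

lemma orthonormal_rows:
  fixes V :: "real^'n^'n"
  assumes "transpose V ** V = mat 1"
  shows "(\<Sum>\<kappa>\<in>UNIV. V $ \<phi> $ \<kappa> * V $ \<psi> $ \<kappa>) = (if \<phi> = \<psi> then 1 else 0)"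
proof -
  have "V ** transpose V = mat 1"
    using assms matrix_left_right_inverse by blast
  moreover have "(V ** transpose V) $ \<phi> $ \<psi> = (\<Sum>\<kappa>\<in>UNIV. V $ \<phi> $ \<kappa> * V $ \<psi> $ \<kappa>)"
    by (simp add: matrix_matrix_mult_def transpose_def)
  ultimately show ?thesis by (simp add: mat_def)
qed

lemma eigenvector_components:
  fixes M V :: "real^'n^'n"
  assumes "M *v column k V = lam k *\<^sub>R column k V"
  shows "(\<Sum>j\<in>UNIV. M $ i $ j * V $ j $ k) = lam k * V $ i $ k"
  using arg_cong[OF assms, of "\<lambda>v. v $ i"] by (simp add: matrix_vector_mult_def column_def)

lemma left_eigenvector_components:
  fixes M V :: "real^'n^'n"
  assumes "transpose M = M" "M *v column k V = lam k *\<^sub>R column k V"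
  shows "(\<Sum>\<phi>\<in>UNIV. V $ \<phi> $ k * M $ \<phi> $ j) = lam k * V $ j $ k"
proof -
  have "M $ \<phi> $ j = M $ j $ \<phi>" for \<phi>
    using assms(1) by (metis transpose_def vec_lambda_beta)
  then show ?thesis
    using eigenvector_components[where lam = lam and k = k, OF assms(2)] by (simp add: mult.commute)
qed

lemma spectral_decomposition:
  fixes M V :: "real^'n^'n"
  assumes orth: "transpose V ** V = mat 1" and eig: "\<And>k. M *v column k V = lam k *\<^sub>R column k V"
  shows "(\<Sum>l\<in>UNIV. V $ i $ l * V $ j $ l * lam l) = M $ i $ j"
proof -
  have ev: "(\<Sum>k\<in>UNIV. M $ i $ k * V $ k $ l) = lam l * V $ i $ l" for l
    by (rule eigenvector_components[where lam = lam, OF eig])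
  have "(\<Sum>l\<in>UNIV. V $ i $ l * V $ j $ l * lam l) = (\<Sum>l\<in>UNIV. (\<Sum>k\<in>UNIV. M $ i $ k * V $ k $ l) * V $ j $ l)"
    by (simp add: ev algebra_simps)
  also have "\<dots> = (\<Sum>l\<in>UNIV. \<Sum>k\<in>UNIV. M $ i $ k * V $ k $ l * V $ j $ l)"
    by (simp add: sum_distrib_right)
  also have "\<dots> = (\<Sum>k\<in>UNIV. M $ i $ k * (\<Sum>l\<in>UNIV. V $ k $ l * V $ j $ l))"
    by (subst sum.swap) (simp add: sum_distrib_left mult.assoc)
  also have "\<dots> = M $ i $ j"
    by (simp add: orthonormal_rows[OF orth] mult_if_zero)
  finally show ?thesis .
qed

section \<open>The spectrum of the linearisation\<close>

lemma det_rank_triangular: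
  fixes A :: "'a::comm_ring_1^'n^'n" and r :: "'n \<Rightarrow> nat"
  assumes zero: "\<And>i j. i \<noteq> j \<Longrightarrow> r j \<le> r i \<Longrightarrow> A $ i $ j = 0"
  shows "det A = (\<Prod>i\<in>UNIV. A $ i $ i)"
proof -
  let ?U = "UNIV :: 'n set"
  have vanish: "of_int (sign p) * (\<Prod>i\<in>?U. A $ i $ p i) = 0" if "p \<in> {p. p permutes ?U} - {id}" for p
  proof -
    from that have p: "p permutes ?U" "p \<noteq> id" by auto
    have "\<exists>i. A $ i $ p i = 0"
    proof (rule ccontr)
      assume "\<nexists>i. A $ i $ p i = 0"
      then have lt: "r i < r (p i)" if "p i \<noteq> i" for i
        using zero[of i "p i"] that by (metis not_less)
      then have le: "r i \<le> r (p i)" for i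
        by (cases "p i = i") (auto simp: less_imp_le)
      obtain i0 where "p i0 \<noteq> i0" using p(2) by (metis eq_id_iff)
      then have "sum r ?U < sum (r \<circ> p) ?U"
        by (intro sum_strict_mono_ex1) (use le lt in auto)
      also have "sum (r \<circ> p) ?U = sum r ?U"
        using sum.reindex[OF permutes_inj[OF p(1)], of r] permutes_image[OF p(1)] by simp
      finally show False by simp
    qed
    then have "(\<Prod>i\<in>?U. A $ i $ p i) = 0"
      by (metis UNIV_I finite_class.finite_UNIV prod_zero)
    then show ?thesis by simp
  qed
  have "{id} \<subseteq> {p. p permutes ?U}"
    by (simp add: permutes_id)
  from sum.mono_neutral_cong_left[OF finite_permutations[of ?U] this ballI[OF vanish]] show ?thesis
    unfolding det_def by (simp add: sign_id)
qed

lemma sum_UNIV_Plus: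
  "(\<Sum>u\<in>(UNIV :: ('i::finite + 'j::finite) set). f u) = (\<Sum>i\<in>UNIV. f (Inl i)) + (\<Sum>j\<in>UNIV. f (Inr j))"
  using sum.Plus[of "UNIV :: 'i set" "UNIV :: 'j set" f] by (simp add: comp_def)

lemma prod_UNIV_Plus:
  "(\<Prod>u\<in>(UNIV :: ('i::finite + 'j::finite) set). f u) = (\<Prod>i\<in>UNIV. f (Inl i)) * (\<Prod>j\<in>UNIV. f (Inr j))"
  using prod.Plus[of "UNIV :: 'i set" "UNIV :: 'j set" f] by (simp add: comp_def)

text \<open>
  Square blocks are represented as functions of type \<^typ>\<open>'n \<Rightarrow> 'n \<Rightarrow> 'a\<close>, so that block
  matrices over the index type \<^typ>\<open>'n + 'n\<close> can be assembled from them.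
\<close>
definition block_mat ::
  "('n::finite \<Rightarrow> 'n \<Rightarrow> 'a) \<Rightarrow> ('n \<Rightarrow> 'n \<Rightarrow> 'a) \<Rightarrow> ('n \<Rightarrow> 'n \<Rightarrow> 'a) \<Rightarrow> ('n \<Rightarrow> 'n \<Rightarrow> 'a) \<Rightarrow> 'a^('n + 'n)^('n + 'n)"
  where "block_mat A B C D = (\<chi> r t. case r of
      Inl i \<Rightarrow> (case t of Inl j \<Rightarrow> A i j | Inr j \<Rightarrow> B i j)
    | Inr i \<Rightarrow> (case t of Inl j \<Rightarrow> C i j | Inr j \<Rightarrow> D i j))"

definition fmat_mult :: "('n::finite \<Rightarrow> 'n \<Rightarrow> 'a::comm_ring_1) \<Rightarrow> ('n \<Rightarrow> 'n \<Rightarrow> 'a) \<Rightarrow> 'n \<Rightarrow> 'n \<Rightarrow> 'a"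
  where "fmat_mult A B i j = (\<Sum>k\<in>UNIV. A i k * B k j)"

definition fmat_id :: "'n \<Rightarrow> 'n \<Rightarrow> 'a::comm_ring_1"
  where "fmat_id i j = (if i = j then 1 else 0)"

definition fmat_zero :: "'n \<Rightarrow> 'n \<Rightarrow> 'a::comm_ring_1"
  where "fmat_zero i j = 0"

definition fmat_scalar :: "'a::comm_ring_1 \<Rightarrow> 'n \<Rightarrow> 'n \<Rightarrow> 'a"
  where "fmat_scalar x i j = (if i = j then x else 0)"

definition symplectic_J :: "'a::comm_ring_1^('n::finite + 'n)^('n + 'n)"
  where "symplectic_J = block_mat fmat_zero fmat_id (\<lambda>i j. - fmat_id i j) fmat_zero"

lemma block_mat_mult:
  "block_mat A B C D ** block_mat A' B' C' D' =
    block_mat (\<lambda>i j. fmat_mult A A' i j + fmat_mult B C' i j) (\<lambda>i j. fmat_mult A B' i j + fmat_mult B D' i j)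
              (\<lambda>i j. fmat_mult C A' i j + fmat_mult D C' i j) (\<lambda>i j. fmat_mult C B' i j + fmat_mult D D' i j)"
  by (simp add: block_mat_def matrix_matrix_mult_def fmat_mult_def vec_eq_iff sum_UNIV_Plus split: sum.split)

lemma fmat_mult_id_left [simp]: "fmat_mult fmat_id A = A"
  by (simp add: fmat_mult_def fmat_id_def fun_eq_iff if_zero_mult mult_if_zero)

lemma fmat_mult_id_right [simp]: "fmat_mult A fmat_id = A"
  by (simp add: fmat_mult_def fmat_id_def fun_eq_iff if_zero_mult mult_if_zero)

lemma fmat_mult_zero_left [simp]: "fmat_mult fmat_zero A = fmat_zero"
  by (simp add: fmat_mult_def fmat_zero_def fun_eq_iff)

lemma fmat_mult_zero_right [simp]: "fmat_mult A fmat_zero = fmat_zero"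
  by (simp add: fmat_mult_def fmat_zero_def fun_eq_iff)

lemma fmat_mult_scalar_left [simp]: "fmat_mult (fmat_scalar x) A = (\<lambda>i j. x * A i j)"
  by (simp add: fmat_mult_def fmat_scalar_def fun_eq_iff if_zero_mult mult_if_zero)

lemma fmat_mult_neg_left: "fmat_mult (\<lambda>i j. - A i j) B = (\<lambda>i j. - fmat_mult A B i j)"
  by (simp add: fmat_mult_def fun_eq_iff sum_negf)

lemma fmat_mult_assoc: "fmat_mult (fmat_mult A B) C = fmat_mult A (fmat_mult B C)"
  unfolding fmat_mult_def fun_eq_iff
  by (simp add: sum_distrib_left sum_distrib_right mult.assoc, intro allI, rule sum.swap)

lemma fmat_zero_apply [simp]: "fmat_zero i j = 0"
  by (simp add: fmat_zero_def)

lemma block_mat_id: "block_mat fmat_id fmat_zero fmat_zero fmat_id = mat 1"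
  by (simp add: block_mat_def mat_def vec_eq_iff fmat_id_def split: sum.split)

lemma det_block_upper_unitriangular: "det (block_mat fmat_id B fmat_zero fmat_id) = 1"
  by (subst det_rank_triangular[where r = "\<lambda>u. case u of Inl _ \<Rightarrow> 0 | Inr _ \<Rightarrow> 1"])
     (auto simp: block_mat_def fmat_id_def prod_UNIV_Plus split: sum.split)

lemma det_block_lower_unitriangular: "det (block_mat fmat_id fmat_zero C fmat_id) = 1"
  by (subst det_rank_triangular[where r = "\<lambda>u. case u of Inl _ \<Rightarrow> 1 | Inr _ \<Rightarrow> 0"])
     (auto simp: block_mat_def fmat_id_def prod_UNIV_Plus split: sum.split)

lemma det_block_diagonal:
  "det (block_mat fmat_id fmat_zero fmat_zero (\<lambda>i j. if i = j then d i else 0)) = (\<Prod>k\<in>UNIV. d k)"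
  by (subst det_diagonal) (auto simp: block_mat_def fmat_id_def prod_UNIV_Plus split: sum.split)

lemma det_symplectic_J_squared: "det (symplectic_J :: 'a::comm_ring_1^('n::finite + 'n)^('n + 'n)) ^ 2 = 1"
proof -
  have "(symplectic_J :: 'a^('n + 'n)^('n + 'n)) ** symplectic_J
      = block_mat (\<lambda>i j. - fmat_id i j) fmat_zero fmat_zero (\<lambda>i j. - fmat_id i j)"
    by (simp add: symplectic_J_def block_mat_mult fmat_mult_neg_left, simp add: fmat_zero_def[abs_def])
  also have "det \<dots> = (- 1) ^ (2 * CARD('n))"
    by (subst det_diagonal)
       (auto simp: block_mat_def fmat_id_def prod_UNIV_Plus power_mult power2_eq_square split: sum.split)
  finally show ?thesis by (simp add: det_mul power2_eq_square power_mult)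
qed

text \<open>
  Times \<^const>\<open>symplectic_J\<close> the pencil becomes [[1, A], [-x, 1]] with A = x - M, which is
  lower unitriangular \<cdot> diag(1, 1 + x A) \<cdot> upper unitriangular; and 1 + x A is diagonalised by V.
\<close>
lemma det_block_pencil:
  fixes M V :: "'n::finite \<Rightarrow> 'n \<Rightarrow> 'a::comm_ring_1" and x :: 'a and d :: "'n \<Rightarrow> 'a"
  assumes orth: "fmat_mult V (\<lambda>i j. V j i) = fmat_id"
    and diag: "(\<lambda>i j. (if i = j then 1 + x * x else 0) - x * M i j)
               = fmat_mult (fmat_mult V (\<lambda>i j. if i = j then d i else 0)) (\<lambda>i j. V j i)"
  shows "det (block_mat (\<lambda>i j. fmat_scalar x i j - M i j) (\<lambda>i j. - fmat_id i j) fmat_id (fmat_scalar x))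
           * det (symplectic_J :: 'a^('n + 'n)^('n + 'n)) = (\<Prod>k\<in>UNIV. d k)"
proof -
  define A where "A = (\<lambda>i j. fmat_scalar x i j - M i j)"
  define W where "W = (\<lambda>i j. (if i = j then 1 + x * x else 0) - x * M i j)"
  define D where "D = (\<lambda>i j. if i = j then d i else (0::'a))"
  define VT where "VT = (\<lambda>i j. V j i)"
  let ?diag = "\<lambda>B. block_mat fmat_id fmat_zero fmat_zero B :: 'a^('n + 'n)^('n + 'n)"
  let ?Z = "block_mat A (\<lambda>i j. - fmat_id i j) fmat_id (fmat_scalar x) :: 'a^('n + 'n)^('n + 'n)"
  let ?L = "block_mat fmat_id fmat_zero (\<lambda>i j. - fmat_scalar x i j) fmat_id :: 'a^('n + 'n)^('n + 'n)"
  let ?U = "block_mat fmat_id A fmat_zero fmat_id :: 'a^('n + 'n)^('n + 'n)"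
  have ZJ: "?Z ** symplectic_J = block_mat fmat_id A (\<lambda>i j. - fmat_scalar x i j) fmat_id"
    by (simp add: symplectic_J_def block_mat_mult fmat_mult_neg_left,
        simp add: fmat_id_def[abs_def] fmat_scalar_def[abs_def] fmat_zero_def[abs_def]
          if_zero_mult mult_if_zero cong: if_cong)
  have LDU: "?L ** (?diag W ** ?U) = block_mat fmat_id A (\<lambda>i j. - fmat_scalar x i j) fmat_id"
    by (simp add: block_mat_mult fmat_mult_neg_left, intro arg_cong2[where f = "block_mat _ _"] ext)
       (auto simp: fmat_id_def fmat_scalar_def fmat_zero_def fmat_mult_def A_def W_def
          if_zero_mult mult_if_zero algebra_simps)
  have W_factor: "?diag W = ?diag V ** (?diag D ** ?diag VT)"
    by (simp add: block_mat_mult W_def diag D_def VT_def fmat_mult_assoc;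
        (simp add: fmat_zero_def[abs_def] fmat_mult_def[abs_def])?)
  have V_inv: "det (?diag V) * det (?diag VT) = 1"
  proof -
    have "?diag V ** ?diag VT = ?diag fmat_id"
      by (simp add: block_mat_mult VT_def orth; (simp add: fmat_zero_def[abs_def] fmat_mult_def[abs_def])?)
    then show ?thesis by (simp add: det_mul[symmetric] block_mat_id)
  qed
  have "det ?Z * det (symplectic_J :: 'a^('n + 'n)^('n + 'n)) = det (?Z ** symplectic_J)"
    by (rule det_mul[symmetric])
  also have "\<dots> = det (?L ** (?diag W ** ?U))"
    by (simp only: ZJ LDU)
  also have "\<dots> = det ?L * (det (?diag W) * det ?U)"
    by (simp add: det_mul)
  also have "\<dots> = det (?diag V) * det (?diag VT) * det (?diag D)"
    by (simp add: det_block_upper_unitriangular det_block_lower_unitriangular W_factor det_mul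
        algebra_simps)
  also have "\<dots> = (\<Prod>k\<in>UNIV. d k)"
    by (simp add: V_inv D_def det_block_diagonal)
  finally show ?thesis by (simp add: A_def)
qed

definition coupled_linear :: "real^'n^'n \<Rightarrow> real^('n::finite + 'n) \<Rightarrow> real^('n + 'n)" where
  "coupled_linear M z = (\<chi> s. case s of
      Inl i \<Rightarrow> z $ Inr i + (\<Sum>j\<in>UNIV. M $ i $ j * z $ Inl j)
    | Inr i \<Rightarrow> - z $ Inl i)"

lemma has_derivative_vec_nth: "((\<lambda>z. z $ k) has_derivative (\<lambda>h. h $ k)) F"
  by (rule bounded_linear_imp_has_derivative[OF bounded_linear_vec_nth])

lemma coupled_field_zero: "coupled_field a b M 0 = 0"
  by (simp add: coupled_field_def vec_eq_iff split: sum.split)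

lemma coupled_field_has_derivative: "(coupled_field a b M has_derivative coupled_linear M) (at 0)"
proof -
  have "((\<lambda>z. coupled_field a b M z $ u) has_derivative (\<lambda>h. coupled_linear M h $ u)) (at 0)" for u
  proof (cases u)
    case (Inl i)
    have "((\<lambda>z. z $ Inr i + a * (z $ Inl i)^2 + b * (z $ Inl i)^3 + (\<Sum>j\<in>UNIV. M $ i $ j * z $ Inl j))
        has_derivative (\<lambda>h. h $ Inr i + (\<Sum>j\<in>UNIV. M $ i $ j * h $ Inl j))) (at 0)"
      by (auto intro!: derivative_eq_intros has_derivative_vec_nth)
    then show ?thesis using Inl by (simp add: coupled_field_def coupled_linear_def)
  next
    case (Inr i)
    have "((\<lambda>z. - z $ Inl i) has_derivative (\<lambda>h. - h $ Inl i)) (at 0)"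
      by (auto intro!: derivative_eq_intros has_derivative_vec_nth)
    then show ?thesis using Inr by (simp add: coupled_field_def coupled_linear_def)
  qed
  then show ?thesis
    by (subst has_derivative_componentwise_within) (auto simp: Basis_vec_def inner_axis)
qed

lemma jacobian_coupled_field: "jacobian (coupled_field a b M) (at 0) = matrix (coupled_linear M)"
  unfolding jacobian_def
  by (rule arg_cong[where f = matrix, OF frechet_derivative_at[OF coupled_field_has_derivative, symmetric]])

lemma of_real_if_zero: "of_real (if P then a else 0) = (if P then of_real a else 0)"
  by simp

lemma charpoly_coupled_linear_block:
  "charpoly (matrix (coupled_linear M)) =
     det (block_mat (\<lambda>i j. fmat_scalar [:0, 1:] i j - [:complex_of_real (M $ i $ j):])
                    (\<lambda>i j. - fmat_id i j) fmat_id (fmat_scalar [:0, 1:]))"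
  unfolding charpoly_def
  by (rule arg_cong[where f = det])
     (auto simp: vec_eq_iff block_mat_def matrix_def coupled_linear_def axis_def fmat_scalar_def fmat_id_def
        one_pCons if_zero_mult mult_if_zero of_real_if_zero split: sum.split)

lemma sum_pCons_quadratic:
  "finite A \<Longrightarrow> (\<Sum>l\<in>A. [:p l, q l, r l:]) = [:\<Sum>l\<in>A. p l, \<Sum>l\<in>A. q l, \<Sum>l\<in>A. r l:]"
  by (induction A rule: finite_induct) simp_all

lemma sum_pCons_const: "finite A \<Longrightarrow> (\<Sum>l\<in>A. [:f l:]) = [:\<Sum>l\<in>A. f l:]"
  by (induction A rule: finite_induct) simp_all

lemma charpoly_coupled_linear:
  fixes M V :: "real^'n^'n"
  assumes orth: "transpose V ** V = mat 1" and eig: "\<And>k. M *v column k V = lam k *\<^sub>R column k V"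
  shows "charpoly (matrix (coupled_linear M)) * det (symplectic_J :: complex poly^('n + 'n)^('n + 'n))
      = (\<Prod>k\<in>UNIV. [:1, - complex_of_real (lam k), 1:])"
proof -
  define Vc where "Vc = (\<lambda>i j. [:complex_of_real (V $ i $ j):])"
  define Mc where "Mc = (\<lambda>i j. [:complex_of_real (M $ i $ j):])"
  define d where "d = (\<lambda>k. [:1, - complex_of_real (lam k), 1:])"
  define x where "x = ([:0, 1:] :: complex poly)"
  have rows:
    "(\<Sum>l\<in>UNIV. complex_of_real (V $ i $ l) * complex_of_real (V $ j $ l)) = (if i = j then 1 else 0)"
    for i j
    using arg_cong[OF orthonormal_rows[OF orth, of i j], of complex_of_real] by (cases "i = j") simp_all
  have "fmat_mult Vc (\<lambda>i j. Vc j i) i j = fmat_id i j" for i j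
  proof -
    have "fmat_mult Vc (\<lambda>i j. Vc j i) i j = [:\<Sum>l\<in>UNIV. complex_of_real (V $ i $ l * V $ j $ l):]"
      by (simp add: fmat_mult_def Vc_def sum_pCons_const[symmetric] mult.commute)
    then show ?thesis
      by (simp add: rows fmat_id_def one_pCons)
  qed
  then have Vc_orth: "fmat_mult Vc (\<lambda>i j. Vc j i) = fmat_id"
    by (simp add: fun_eq_iff)
  have "fmat_mult (fmat_mult Vc (\<lambda>i j. if i = j then d i else 0)) (\<lambda>i j. Vc j i) i j
      = (if i = j then 1 + x * x else 0) - x * Mc i j" for i j
  proof -
    have "fmat_mult (fmat_mult Vc (\<lambda>i j. if i = j then d i else 0)) (\<lambda>i j. Vc j i) i j
        = (\<Sum>l\<in>UNIV. smult (complex_of_real (V $ i $ l * V $ j $ l)) (d l))"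
    proof -
      have "(\<Sum>k\<in>UNIV. Vc i k * (if k = l then d k else 0)) = Vc i l * d l" for l
        by (simp add: mult_if_zero)
      then show ?thesis
        unfolding fmat_mult_def by (intro sum.cong) (simp_all add: Vc_def algebra_simps)
    qed
    also have "\<dots> = [:\<Sum>l\<in>UNIV. complex_of_real (V $ i $ l * V $ j $ l),
                      - complex_of_real (\<Sum>l\<in>UNIV. V $ i $ l * V $ j $ l * lam l),
                      \<Sum>l\<in>UNIV. complex_of_real (V $ i $ l * V $ j $ l):]"
      by (simp add: d_def sum_pCons_quadratic sum_negf)
    also have "\<dots> = (if i = j then 1 + x * x else 0) - x * Mc i j"
      by (simp add: spectral_decomposition[OF orth eig] rows x_def Mc_def one_pCons)
    finally show ?thesis .
  qed
  then have "(\<lambda>i j. (if i = j then 1 + x * x else 0) - x * Mc i j)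
      = fmat_mult (fmat_mult Vc (\<lambda>i j. if i = j then d i else 0)) (\<lambda>i j. Vc j i)"
    by (simp add: fun_eq_iff)
  from det_block_pencil[OF Vc_orth this] show ?thesis
    by (simp add: charpoly_coupled_linear_block x_def Mc_def d_def)
qed

lemma order_eq_if_mult_unit:
  fixes p q c :: "complex poly"
  assumes "p * c = q" "c ^ 2 = 1"
  shows "order \<alpha> p = order \<alpha> q" and "poly p \<mu> = 0 \<longleftrightarrow> poly q \<mu> = 0"
proof -
  have c: "poly c \<mu> \<noteq> 0" for \<mu>
    using arg_cong[OF assms(2), of "\<lambda>p. poly p \<mu>"] by auto
  show "poly p \<mu> = 0 \<longleftrightarrow> poly q \<mu> = 0"
    using c[of \<mu>] by (simp flip: assms(1))
  show "order \<alpha> p = order \<alpha> q"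
  proof (cases "q = 0")
    case True
    with assms c show ?thesis by auto
  next
    case False
    then show ?thesis
      using order_mult[of p c \<alpha>] order_0I[OF c] assms(1) by simp
  qed
qed

lemma damped_oscillator_root:
  assumes "poly [:1, - complex_of_real l, 1:] \<mu> = 0" "l < 0"
  shows "Re \<mu> < 0"
proof -
  have e: "1 - complex_of_real l * \<mu> + \<mu> * \<mu> = 0"
    using assms(1) by (simp add: algebra_simps)
  have re: "1 - l * Re \<mu> + (Re \<mu> * Re \<mu> - Im \<mu> * Im \<mu>) = 0"
    using arg_cong[OF e, of Re] by simp
  have im: "Im \<mu> * (2 * Re \<mu> - l) = 0"
    using arg_cong[OF e, of Im] by (simp add: algebra_simps)
  show ?thesis
  proof (cases "Im \<mu> = 0")
    case True
    show ?thesis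
    proof (rule ccontr)
      assume "\<not> Re \<mu> < 0"
      then have "l * Re \<mu> \<le> 0"
        using assms(2) by (simp add: mult_nonpos_nonneg)
      moreover have "Re \<mu> * Re \<mu> \<ge> 0"
        by simp
      moreover have "1 - l * Re \<mu> + Re \<mu> * Re \<mu> = 0"
        using re True by simp
      ultimately show False
        by linarith
    qed
  next
    case False
    with im assms(2) show ?thesis by simp
  qed
qed

lemma oscillator_product_spectrum:
  fixes lam :: "'n::finite \<Rightarrow> real"
  assumes lam_k0: "lam k0 = 0" and lam_neg: "\<And>k. k \<noteq> k0 \<Longrightarrow> lam k < 0"
  defines "P \<equiv> \<Prod>k\<in>UNIV. [:1, - complex_of_real (lam k), 1:]"
  shows "order \<i> P = 1" "order (- \<i>) P = 1" "poly P \<mu> = 0 \<Longrightarrow> \<mu> = \<i> \<or> \<mu> = - \<i> \<or> Re \<mu> < 0"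
proof -
  define Q where "Q = (\<Prod>k\<in>UNIV - {k0}. [:1, - complex_of_real (lam k), 1:])"
  have "P = [:1, - complex_of_real (lam k0), 1:] * Q"
    by (simp add: P_def Q_def prod.remove)
  moreover have "[:1, - complex_of_real (lam k0), 1:] = [:- \<i>, 1:] * [:\<i>, 1:]"
    by (simp add: lam_k0)
  ultimately have PQ: "P = [:- \<i>, 1:] * ([:\<i>, 1:] * Q)" "P = [:\<i>, 1:] * ([:- \<i>, 1:] * Q)"
    by (simp_all only: mult.assoc mult.commute[of "[:- \<i>, 1:]"])
  have Q: "poly Q \<alpha> \<noteq> 0" if "\<alpha> = \<i> \<or> \<alpha> = - \<i>" for \<alpha>
    using lam_neg that by (force simp: Q_def poly_prod prod_zero_iff algebra_simps)
  have P: "P \<noteq> 0"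
    by (simp add: P_def)
  have linear: "order \<alpha> [:- \<beta>, 1:] = (if \<alpha> = \<beta> then 1 else 0)" for \<alpha> \<beta> :: complex
  proof (cases "\<alpha> = \<beta>")
    case True
    then show ?thesis using order_power_n_n[of \<beta> 1] by simp
  next
    case False
    then show ?thesis by (simp add: order_0I)
  qed
  have "order \<alpha> P = order \<alpha> [:- \<i>, 1:] + order \<alpha> [:\<i>, 1:] + order \<alpha> Q" for \<alpha>
  proof -
    have "[:\<i>, 1:] * Q \<noteq> 0"
      using P unfolding PQ(1) by (metis mult_zero_right)
    have "order \<alpha> P = order \<alpha> [:- \<i>, 1:] + order \<alpha> ([:\<i>, 1:] * Q)"
      using P unfolding PQ(1) by (rule order_mult)
    also have "\<dots> = order \<alpha> [:- \<i>, 1:] + (order \<alpha> [:\<i>, 1:] + order \<alpha> Q)"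
      by (simp only: order_mult[OF \<open>[:\<i>, 1:] * Q \<noteq> 0\<close>])
    finally show ?thesis
      by (simp only: add.assoc)
  qed
  moreover have "order \<alpha> [:\<i>, 1:] = (if \<alpha> = - \<i> then 1 else 0)" for \<alpha>
    using linear[of \<alpha> "- \<i>"] by simp
  ultimately show "order \<i> P = 1" "order (- \<i>) P = 1"
    using linear[of _ \<i>] order_0I[OF Q] by simp_all
  show "\<mu> = \<i> \<or> \<mu> = - \<i> \<or> Re \<mu> < 0" if root: "poly P \<mu> = 0"
  proof -
    obtain k where k: "poly [:1, - complex_of_real (lam k), 1:] \<mu> = 0"
      using root by (auto simp: P_def poly_prod prod_zero_iff simp del: poly_pCons)
    show ?thesis
    proof (cases "k = k0")
      case True
      then have "(\<mu> - \<i>) * (\<mu> + \<i>) = 0"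
        using k lam_k0 by (simp add: algebra_simps power2_eq_square)
      then show ?thesis by (auto simp: eq_neg_iff_add_eq_0)
    next
      case False
      then show ?thesis using damped_oscillator_root[OF k lam_neg] by simp
    qed
  qed
qed

lemma coupled_field_spectrum:
  fixes a b :: real and M V :: "real^'n^'n"
  assumes orth: "transpose V ** V = mat 1" and eig: "\<And>k. M *v column k V = lam k *\<^sub>R column k V"
    and lam_k0: "lam k0 = 0" and lam_neg: "\<And>k. k \<noteq> k0 \<Longrightarrow> lam k < 0"
  defines "p \<equiv> charpoly (jacobian (coupled_field a b M) (at 0))"
  shows "order \<i> p = 1" "order (- \<i>) p = 1" "poly p \<mu> = 0 \<Longrightarrow> \<mu> = \<i> \<or> \<mu> = - \<i> \<or> Re \<mu> < 0"
proof -
  have factor: "p * det (symplectic_J :: complex poly^('n + 'n)^('n + 'n))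
      = (\<Prod>k\<in>UNIV. [:1, - complex_of_real (lam k), 1:])"
    using charpoly_coupled_linear[OF orth eig] by (simp add: p_def jacobian_coupled_field)
  note same = order_eq_if_mult_unit[OF factor det_symplectic_J_squared]
  note osc = oscillator_product_spectrum[of lam k0, OF lam_k0 lam_neg]
  show "order \<i> p = 1" "order (- \<i>) p = 1"
    using osc(1,2) by (simp_all add: same(1))
  show "poly p \<mu> = 0 \<Longrightarrow> \<mu> = \<i> \<or> \<mu> = - \<i> \<or> Re \<mu> < 0"
    using osc(3) by (simp add: same(2))
qed

section \<open>The reduced system on a center manifold\<close>

lemma coord_u_coupled_field:
  fixes M V :: "real^'n^'n"
  assumes "transpose M = M" and "\<And>k. M *v column k V = lam k *\<^sub>R column k V"
  shows "coord_u V \<kappa> (coupled_field a b M z) = coord_p V \<kappa> z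
      + a * (\<Sum>\<phi>\<in>UNIV. V $ \<phi> $ \<kappa> * (z $ Inl \<phi> * z $ Inl \<phi>))
      + b * (\<Sum>\<phi>\<in>UNIV. V $ \<phi> $ \<kappa> * (z $ Inl \<phi> * z $ Inl \<phi> * z $ Inl \<phi>))
      + lam \<kappa> * coord_u V \<kappa> z"
proof -
  have "(\<Sum>\<phi>\<in>UNIV. V $ \<phi> $ \<kappa> * (\<Sum>j\<in>UNIV. M $ \<phi> $ j * z $ Inl j))
      = (\<Sum>j\<in>UNIV. (\<Sum>\<phi>\<in>UNIV. V $ \<phi> $ \<kappa> * M $ \<phi> $ j) * z $ Inl j)"
    by (simp add: sum_distrib_left sum_distrib_right mult.assoc) (rule sum.swap)
  also have "\<dots> = lam \<kappa> * coord_u V \<kappa> z"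
    by (simp add: left_eigenvector_components[where lam = lam, OF assms] coord_u_def
        sum_distrib_left mult.assoc)
  finally have coupling: "(\<Sum>\<phi>\<in>UNIV. V $ \<phi> $ \<kappa> * (\<Sum>j\<in>UNIV. M $ \<phi> $ j * z $ Inl j))
      = lam \<kappa> * coord_u V \<kappa> z" .
  have "coord_u V \<kappa> (coupled_field a b M z) =
     (\<Sum>\<phi>\<in>UNIV. V $ \<phi> $ \<kappa> * z $ Inr \<phi> + a * (V $ \<phi> $ \<kappa> * (z $ Inl \<phi> * z $ Inl \<phi>))
      + b * (V $ \<phi> $ \<kappa> * (z $ Inl \<phi> * z $ Inl \<phi> * z $ Inl \<phi>))
      + V $ \<phi> $ \<kappa> * (\<Sum>j\<in>UNIV. M $ \<phi> $ j * z $ Inl j))"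
    unfolding coord_u_def
    by (rule sum.cong) (simp_all add: coupled_field_def power2_eq_square power3_eq_cube algebra_simps)
  also have "\<dots> = coord_p V \<kappa> z
      + a * (\<Sum>\<phi>\<in>UNIV. V $ \<phi> $ \<kappa> * (z $ Inl \<phi> * z $ Inl \<phi>))
      + b * (\<Sum>\<phi>\<in>UNIV. V $ \<phi> $ \<kappa> * (z $ Inl \<phi> * z $ Inl \<phi> * z $ Inl \<phi>))
      + (\<Sum>\<phi>\<in>UNIV. V $ \<phi> $ \<kappa> * (\<Sum>j\<in>UNIV. M $ \<phi> $ j * z $ Inl j))"
    by (simp add: sum.distrib sum_distrib_left coord_p_def)
  finally show ?thesis
    by (simp only: coupling)
qed

lemma coord_p_coupled_field: "coord_p V \<kappa> (coupled_field a b M z) = - coord_u V \<kappa> z"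
  by (simp add: coord_p_def coord_u_def coupled_field_def sum_negf[symmetric])

text \<open>
  Second-order Taylor coefficients at the origin of a stable mode (c, d), where cup stands for
  the u-derivative of the p-derivative of c; symmetry of mixed partials is not assumed, it
  follows from the equations.
\<close>
lemma homological_equations_solution:
  fixes l a s cuu cpp cup cpu duu dpp dup dpu :: real
  assumes h1: "duu + l * cuu + 2 * a * s = - 2 * cup"
    and h2: "dpp + l * cpp = 2 * cpu"
    and h3: "dup + l * cup = cuu - cpp"
    and h4: "dpu + l * cpu = cuu - cpp"
    and h5: "cuu = 2 * dup"
    and h6: "- cpp = 2 * dpu"
    and h7: "- cup = duu - dpp"
    and h8: "- cpu = duu - dpp"
  shows "cpp = - cuu" and "cuu * (9 + 4 * l\<^sup>2) = - 4 * l * a * s"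
proof -
  have "cup = cpu" using h7 h8 by linarith
  then have "dup = dpu" using h3 h4 by simp
  then show cpp: "cpp = - cuu" using h5 h6 by linarith
  have r2: "l * cup = 3/2 * cuu" using h3 h5 cpp by linarith
  have "3 * cup + 2 * l * cuu + 2 * a * s = 0"
    using h1 h2 h7 \<open>cup = cpu\<close> cpp by (simp add: algebra_simps; linarith)
  then have "l * (3 * cup + 2 * l * cuu + 2 * a * s) = 0" by simp
  then have "3 * (l * cup) + 2 * l\<^sup>2 * cuu + 2 * l * a * s = 0"
    by (simp add: algebra_simps power2_eq_square)
  then have "3 * (3/2 * cuu) + 2 * l\<^sup>2 * cuu + 2 * l * a * s = 0" using r2 by simp
  then show "cuu * (9 + 4 * l\<^sup>2) = - 4 * l * a * s" by (simp add: algebra_simps; linarith)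
qed

locale coupled_center_manifold =
  fixes a b :: real and M V :: "real^'n^'n" and lam :: "'n \<Rightarrow> real" and k0 :: 'n
    and S :: "(real \<times> real) set" and Phi :: "real \<times> real \<Rightarrow> real^('n + 'n)"
  assumes symM: "transpose M = M"
    and orthV: "transpose V ** V = mat 1"
    and eig: "\<And>k. M *v column k V = lam k *\<^sub>R column k V"
    and lam_k0: "lam k0 = 0"
    and center_manifold: "local_center_manifold (coupled_field a b M) (coord_u V k0) (coord_p V k0)
        (center_e1 V k0) (center_e2 V k0) S Phi"
begin

lemma S_open: "open S"
  and origin_in_S: "(0, 0) \<in> S"
  and Phi_origin: "Phi (0, 0) = 0"
  and center_coords: "w \<in> S \<Longrightarrow> coord_u V k0 (Phi w) = fst w" "w \<in> S \<Longrightarrow> coord_p V k0 (Phi w) = snd w"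
  and tangent_at_origin: "pd1 Phi (0, 0) = center_e1 V k0" "pd2 Phi (0, 0) = center_e2 V k0"
  and Phi_C3: "Ck 3 S Phi"
  and invariance: "w \<in> S \<Longrightarrow> coupled_field a b M (Phi w)
      = coord_u V k0 (coupled_field a b M (Phi w)) *\<^sub>R pd1 Phi w
        + coord_p V k0 (coupled_field a b M (Phi w)) *\<^sub>R pd2 Phi w"
  using center_manifold by (auto simp: local_center_manifold_def)

abbreviation Du :: "(real \<times> real \<Rightarrow> real) \<Rightarrow> real \<times> real \<Rightarrow> real" where
  "Du \<equiv> pd1_on S"

abbreviation Dp :: "(real \<times> real \<Rightarrow> real) \<Rightarrow> real \<times> real \<Rightarrow> real" where
  "Dp \<equiv> pd2_on S"

definition x_comp :: "'n \<Rightarrow> real \<times> real \<Rightarrow> real" where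
  "x_comp \<phi> w = Phi w $ Inl \<phi>"

definition y_comp :: "'n \<Rightarrow> real \<times> real \<Rightarrow> real" where
  "y_comp \<phi> w = Phi w $ Inr \<phi>"

definition u_mode :: "'n \<Rightarrow> real \<times> real \<Rightarrow> real" where
  "u_mode \<kappa> w = (\<Sum>\<phi>\<in>UNIV. V $ \<phi> $ \<kappa> * x_comp \<phi> w)"

definition p_mode :: "'n \<Rightarrow> real \<times> real \<Rightarrow> real" where
  "p_mode \<kappa> w = (\<Sum>\<phi>\<in>UNIV. V $ \<phi> $ \<kappa> * y_comp \<phi> w)"

definition quad_mode :: "'n \<Rightarrow> real \<times> real \<Rightarrow> real" where
  "quad_mode \<kappa> w = (\<Sum>\<phi>\<in>UNIV. V $ \<phi> $ \<kappa> * (x_comp \<phi> w * x_comp \<phi> w))"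

definition cubic_mode :: "'n \<Rightarrow> real \<times> real \<Rightarrow> real" where
  "cubic_mode \<kappa> w = (\<Sum>\<phi>\<in>UNIV. V $ \<phi> $ \<kappa> * (x_comp \<phi> w * x_comp \<phi> w * x_comp \<phi> w))"

definition quad_coeff :: "'n \<Rightarrow> real" where
  "quad_coeff \<kappa> = (\<Sum>\<phi>\<in>UNIV. V $ \<phi> $ \<kappa> * (V $ \<phi> $ k0 * V $ \<phi> $ k0))"

lemma Ck_x_comp: "k \<le> 3 \<Longrightarrow> Ck k S (x_comp \<phi>)"
  unfolding x_comp_def by (rule Ck_le[OF Ck_vec_nth[OF S_open Phi_C3]])

lemma Ck_y_comp: "k \<le> 3 \<Longrightarrow> Ck k S (y_comp \<phi>)"
  unfolding y_comp_def by (rule Ck_le[OF Ck_vec_nth[OF S_open Phi_C3]])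

lemma Ck_u_mode: "k \<le> 3 \<Longrightarrow> Ck k S (u_mode \<kappa>)"
  unfolding u_mode_def by (intro Ck_sum[OF S_open] Ck_mult[OF S_open] Ck_const Ck_x_comp) simp_all

lemma Ck_p_mode: "k \<le> 3 \<Longrightarrow> Ck k S (p_mode \<kappa>)"
  unfolding p_mode_def by (intro Ck_sum[OF S_open] Ck_mult[OF S_open] Ck_const Ck_y_comp) simp_all

lemma Ck_quad_mode: "k \<le> 3 \<Longrightarrow> Ck k S (quad_mode \<kappa>)"
  unfolding quad_mode_def by (intro Ck_sum[OF S_open] Ck_mult[OF S_open] Ck_const Ck_x_comp) simp_all

lemma Ck_cubic_mode: "k \<le> 3 \<Longrightarrow> Ck k S (cubic_mode \<kappa>)"
  unfolding cubic_mode_def by (intro Ck_sum[OF S_open] Ck_mult[OF S_open] Ck_const Ck_x_comp) simp_all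

lemma partially_differentiable_Phi: "w \<in> S \<Longrightarrow> partially_differentiable_at Phi w"
  using Ck_imp_partially_differentiable_at[of 2 S Phi] Phi_C3 by (simp add: numeral_3_eq_3)

lemma comp_origin: "x_comp \<phi> (0, 0) = 0" "y_comp \<phi> (0, 0) = 0"
  by (simp_all add: x_comp_def y_comp_def Phi_origin)

lemma pd_comp_origin:
  "Du (x_comp \<phi>) (0, 0) = V $ \<phi> $ k0" "Dp (x_comp \<phi>) (0, 0) = 0"
  "Du (y_comp \<phi>) (0, 0) = 0" "Dp (y_comp \<phi>) (0, 0) = V $ \<phi> $ k0"
  using pd1_vec_nth[OF partially_differentiable_Phi[OF origin_in_S]]
    pd2_vec_nth[OF partially_differentiable_Phi[OF origin_in_S]] origin_in_S tangent_at_origin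
  by (simp_all add: pd1_on_def pd2_on_def x_comp_def[abs_def] y_comp_def[abs_def]
      center_e1_def center_e2_def)

lemma u_mode_eq: "u_mode \<kappa> w = coord_u V \<kappa> (Phi w)"
  by (simp add: u_mode_def coord_u_def x_comp_def)

lemma p_mode_eq: "p_mode \<kappa> w = coord_p V \<kappa> (Phi w)"
  by (simp add: p_mode_def coord_p_def y_comp_def)

lemma x_comp_modal_expansion: "x_comp \<phi> = (\<lambda>w. \<Sum>\<kappa>\<in>UNIV. V $ \<phi> $ \<kappa> * u_mode \<kappa> w)"
proof
  fix w
  have "(\<Sum>\<kappa>\<in>UNIV. V $ \<phi> $ \<kappa> * u_mode \<kappa> w)
      = (\<Sum>\<psi>\<in>UNIV. (\<Sum>\<kappa>\<in>UNIV. V $ \<phi> $ \<kappa> * V $ \<psi> $ \<kappa>) * x_comp \<psi> w)"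
    by (simp add: u_mode_def sum_distrib_left sum_distrib_right mult.assoc) (rule sum.swap)
  also have "\<dots> = x_comp \<phi> w"
    by (simp add: orthonormal_rows[OF orthV] if_zero_mult)
  finally show "x_comp \<phi> w = (\<Sum>\<kappa>\<in>UNIV. V $ \<phi> $ \<kappa> * u_mode \<kappa> w)" ..
qed

lemma pd_mode_eq:
  "Du (u_mode \<kappa>) = (\<lambda>w. \<Sum>\<phi>\<in>UNIV. V $ \<phi> $ \<kappa> * Du (x_comp \<phi>) w)"
  "Dp (u_mode \<kappa>) = (\<lambda>w. \<Sum>\<phi>\<in>UNIV. V $ \<phi> $ \<kappa> * Dp (x_comp \<phi>) w)"
  "Du (p_mode \<kappa>) = (\<lambda>w. \<Sum>\<phi>\<in>UNIV. V $ \<phi> $ \<kappa> * Du (y_comp \<phi>) w)"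
  "Dp (p_mode \<kappa>) = (\<lambda>w. \<Sum>\<phi>\<in>UNIV. V $ \<phi> $ \<kappa> * Dp (y_comp \<phi>) w)"
  by (simp_all add: u_mode_def[abs_def] p_mode_def[abs_def] pd_on_rules Ck_rules S_open Ck_x_comp Ck_y_comp)

lemma mode_origin:
  "u_mode \<kappa> (0, 0) = 0" "p_mode \<kappa> (0, 0) = 0"
  "Du (u_mode \<kappa>) (0, 0) = (if \<kappa> = k0 then 1 else 0)" "Dp (u_mode \<kappa>) (0, 0) = 0"
  "Du (p_mode \<kappa>) (0, 0) = 0" "Dp (p_mode \<kappa>) (0, 0) = (if \<kappa> = k0 then 1 else 0)"
  by (simp_all add: u_mode_def p_mode_def pd_mode_eq comp_origin pd_comp_origin
      orthonormal_columns[OF orthV])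

lemma quad_mode_origin:
  "quad_mode \<kappa> (0, 0) = 0" "Du (quad_mode \<kappa>) (0, 0) = 0" "Dp (quad_mode \<kappa>) (0, 0) = 0"
  "Du (Du (quad_mode \<kappa>)) (0, 0) = 2 * quad_coeff \<kappa>" "Dp (Dp (quad_mode \<kappa>)) (0, 0) = 0"
  "Du (Dp (quad_mode \<kappa>)) (0, 0) = 0" "Dp (Du (quad_mode \<kappa>)) (0, 0) = 0"
  by (simp_all add: quad_mode_def[abs_def] quad_coeff_def pd_on_rules Ck_rules S_open Ck_x_comp origin_in_S
      comp_origin pd_comp_origin sum_distrib_left algebra_simps)

lemma cubic_mode_origin:
  "cubic_mode \<kappa> (0, 0) = 0" "Du (cubic_mode \<kappa>) (0, 0) = 0" "Dp (cubic_mode \<kappa>) (0, 0) = 0"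
  "Du (Du (cubic_mode \<kappa>)) (0, 0) = 0" "Dp (Dp (cubic_mode \<kappa>)) (0, 0) = 0"
  "Du (Dp (cubic_mode \<kappa>)) (0, 0) = 0" "Dp (Du (cubic_mode \<kappa>)) (0, 0) = 0"
  by (simp_all add: cubic_mode_def[abs_def] pd_on_rules Ck_rules S_open Ck_x_comp origin_in_S
      comp_origin pd_comp_origin)

lemma coupled_field_on_manifold:
  assumes "w \<in> S"
  shows "coord_u V \<kappa> (coupled_field a b M (Phi w))
           = p_mode \<kappa> w + a * quad_mode \<kappa> w + b * cubic_mode \<kappa> w + lam \<kappa> * u_mode \<kappa> w"
    and "coord_p V \<kappa> (coupled_field a b M (Phi w)) = - u_mode \<kappa> w"
  using coord_u_coupled_field[OF symM eig, of \<kappa> a b "Phi w"] coord_p_coupled_field[of V \<kappa> a b M "Phi w"]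
  by (simp_all add: u_mode_eq p_mode_eq quad_mode_def cubic_mode_def x_comp_def)

lemma reduced_field:
  assumes "w \<in> S"
  shows "coord_u V k0 (coupled_field a b M (Phi w)) = snd w + a * quad_mode k0 w + b * cubic_mode k0 w"
    and "coord_p V k0 (coupled_field a b M (Phi w)) = - fst w"
  using coupled_field_on_manifold[OF assms, of k0] center_coords[OF assms]
  by (simp_all add: lam_k0 u_mode_eq p_mode_eq)

lemma mode_invariance:
  assumes w: "w \<in> S"
  shows "p_mode \<kappa> w + lam \<kappa> * u_mode \<kappa> w + a * quad_mode \<kappa> w + b * cubic_mode \<kappa> w
           = (snd w + a * quad_mode k0 w + b * cubic_mode k0 w) * Du (u_mode \<kappa>) w - fst w * Dp (u_mode \<kappa>) w"
    and "- u_mode \<kappa> w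
           = (snd w + a * quad_mode k0 w + b * cubic_mode k0 w) * Du (p_mode \<kappa>) w - fst w * Dp (p_mode \<kappa>) w"
proof -
  let ?F = "coupled_field a b M (Phi w)"
  define f0 where "f0 = snd w + a * quad_mode k0 w + b * cubic_mode k0 w"
  have "?F $ i = coord_u V k0 ?F * pd1 (\<lambda>w. Phi w $ i) w + coord_p V k0 ?F * pd2 (\<lambda>w. Phi w $ i) w" for i
    using arg_cong[OF invariance[OF w], of "\<lambda>z. z $ i"]
      pd1_vec_nth[OF partially_differentiable_Phi[OF w]] pd2_vec_nth[OF partially_differentiable_Phi[OF w]]
    by simp
  then have comps: "?F $ Inl \<phi> = f0 * Du (x_comp \<phi>) w - fst w * Dp (x_comp \<phi>) w"
    "?F $ Inr \<phi> = f0 * Du (y_comp \<phi>) w - fst w * Dp (y_comp \<phi>) w" for \<phi>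
    using w by (simp_all add: f0_def reduced_field pd1_on_def pd2_on_def
        x_comp_def[abs_def] y_comp_def[abs_def])
  have "coord_u V \<kappa> ?F = (\<Sum>\<phi>\<in>UNIV. V $ \<phi> $ \<kappa> * (f0 * Du (x_comp \<phi>) w - fst w * Dp (x_comp \<phi>) w))"
    by (simp add: coord_u_def comps)
  also have "\<dots> = f0 * Du (u_mode \<kappa>) w - fst w * Dp (u_mode \<kappa>) w"
    by (simp add: pd_mode_eq sum_distrib_left sum_subtractf algebra_simps)
  finally show "p_mode \<kappa> w + lam \<kappa> * u_mode \<kappa> w + a * quad_mode \<kappa> w + b * cubic_mode \<kappa> w
      = (snd w + a * quad_mode k0 w + b * cubic_mode k0 w) * Du (u_mode \<kappa>) w - fst w * Dp (u_mode \<kappa>) w"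
    using coupled_field_on_manifold(1)[OF w, of \<kappa>] by (simp add: f0_def)
  have "coord_p V \<kappa> ?F = (\<Sum>\<phi>\<in>UNIV. V $ \<phi> $ \<kappa> * (f0 * Du (y_comp \<phi>) w - fst w * Dp (y_comp \<phi>) w))"
    by (simp add: coord_p_def comps)
  also have "\<dots> = f0 * Du (p_mode \<kappa>) w - fst w * Dp (p_mode \<kappa>) w"
    by (simp add: pd_mode_eq sum_distrib_left sum_subtractf algebra_simps)
  finally show "- u_mode \<kappa> w
      = (snd w + a * quad_mode k0 w + b * cubic_mode k0 w) * Du (p_mode \<kappa>) w - fst w * Dp (p_mode \<kappa>) w"
    using coupled_field_on_manifold(2)[OF w, of \<kappa>] by (simp add: f0_def)
qed

lemma second_order_u_mode:
  assumes "\<kappa> \<noteq> k0"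
  shows "Dp (Dp (u_mode \<kappa>)) (0, 0) = - Du (Du (u_mode \<kappa>)) (0, 0)"
    and "Du (Du (u_mode \<kappa>)) (0, 0) * (9 + 4 * (lam \<kappa>)\<^sup>2) = - 4 * lam \<kappa> * a * quad_coeff \<kappa>"
proof -
  note rules = pd_on_rules Ck_rules S_open origin_in_S Ck_u_mode Ck_p_mode Ck_quad_mode Ck_cubic_mode
    mode_origin quad_mode_origin cubic_mode_origin
  let ?f0 = "\<lambda>w. snd w + a * quad_mode k0 w + b * cubic_mode k0 w"
  have U: "Du (\<lambda>w. p_mode \<kappa> w + lam \<kappa> * u_mode \<kappa> w + a * quad_mode \<kappa> w + b * cubic_mode \<kappa> w)
      = Du (\<lambda>w. ?f0 w * Du (u_mode \<kappa>) w - fst w * Dp (u_mode \<kappa>) w)"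
    "Dp (\<lambda>w. p_mode \<kappa> w + lam \<kappa> * u_mode \<kappa> w + a * quad_mode \<kappa> w + b * cubic_mode \<kappa> w)
      = Dp (\<lambda>w. ?f0 w * Du (u_mode \<kappa>) w - fst w * Dp (u_mode \<kappa>) w)"
    by (rule pd1_on_cong[OF S_open] pd2_on_cong[OF S_open], rule mode_invariance(1), assumption)+
  have P: "Du (\<lambda>w. - u_mode \<kappa> w) = Du (\<lambda>w. ?f0 w * Du (p_mode \<kappa>) w - fst w * Dp (p_mode \<kappa>) w)"
    "Dp (\<lambda>w. - u_mode \<kappa> w) = Dp (\<lambda>w. ?f0 w * Du (p_mode \<kappa>) w - fst w * Dp (p_mode \<kappa>) w)"
    by (rule pd1_on_cong[OF S_open] pd2_on_cong[OF S_open], rule mode_invariance(2), assumption)+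
  have "Du (Du (p_mode \<kappa>)) (0, 0) + lam \<kappa> * Du (Du (u_mode \<kappa>)) (0, 0) + 2 * a * quad_coeff \<kappa>
      = - 2 * Du (Dp (u_mode \<kappa>)) (0, 0)"
    using arg_cong[OF U(1), of "\<lambda>h. Du h (0, 0)"] assms by (simp add: rules)
  moreover have "Dp (Dp (p_mode \<kappa>)) (0, 0) + lam \<kappa> * Dp (Dp (u_mode \<kappa>)) (0, 0)
      = 2 * Dp (Du (u_mode \<kappa>)) (0, 0)"
    using arg_cong[OF U(2), of "\<lambda>h. Dp h (0, 0)"] assms by (simp add: rules)
  moreover have "Du (Dp (p_mode \<kappa>)) (0, 0) + lam \<kappa> * Du (Dp (u_mode \<kappa>)) (0, 0)
      = Du (Du (u_mode \<kappa>)) (0, 0) - Dp (Dp (u_mode \<kappa>)) (0, 0)"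
    using arg_cong[OF U(2), of "\<lambda>h. Du h (0, 0)"] assms by (simp add: rules)
  moreover have "Dp (Du (p_mode \<kappa>)) (0, 0) + lam \<kappa> * Dp (Du (u_mode \<kappa>)) (0, 0)
      = Du (Du (u_mode \<kappa>)) (0, 0) - Dp (Dp (u_mode \<kappa>)) (0, 0)"
    using arg_cong[OF U(1), of "\<lambda>h. Dp h (0, 0)"] assms by (simp add: rules)
  moreover have "Du (Du (u_mode \<kappa>)) (0, 0) = 2 * Du (Dp (p_mode \<kappa>)) (0, 0)"
    using arg_cong[OF P(1), of "\<lambda>h. Du h (0, 0)"] assms by (simp add: rules)
  moreover have "- Dp (Dp (u_mode \<kappa>)) (0, 0) = 2 * Dp (Du (p_mode \<kappa>)) (0, 0)"
    using arg_cong[OF P(2), of "\<lambda>h. Dp h (0, 0)"] assms by (simp add: rules)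
  moreover have "- Du (Dp (u_mode \<kappa>)) (0, 0) = Du (Du (p_mode \<kappa>)) (0, 0) - Dp (Dp (p_mode \<kappa>)) (0, 0)"
    using arg_cong[OF P(2), of "\<lambda>h. Du h (0, 0)"] assms by (simp add: rules)
  moreover have "- Dp (Du (u_mode \<kappa>)) (0, 0) = Du (Du (p_mode \<kappa>)) (0, 0) - Dp (Dp (p_mode \<kappa>)) (0, 0)"
    using arg_cong[OF P(1), of "\<lambda>h. Dp h (0, 0)"] assms by (simp add: rules)
  ultimately show "Dp (Dp (u_mode \<kappa>)) (0, 0) = - Du (Du (u_mode \<kappa>)) (0, 0)"
    and "Du (Du (u_mode \<kappa>)) (0, 0) * (9 + 4 * (lam \<kappa>)\<^sup>2) = - 4 * lam \<kappa> * a * quad_coeff \<kappa>"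
    by (rule homological_equations_solution)+
qed

lemma second_order_u_mode_k0: "Du (Du (u_mode k0)) = (\<lambda>w. 0)" "Dp (Dp (u_mode k0)) = (\<lambda>w. 0)"
proof -
  have "Du (u_mode k0) = Du fst" "Dp (u_mode k0) = Dp fst"
    using center_coords(1) by (simp_all add: u_mode_eq pd1_on_cong[OF S_open] pd2_on_cong[OF S_open])
  then show "Du (Du (u_mode k0)) = (\<lambda>w. 0)" "Dp (Dp (u_mode k0)) = (\<lambda>w. 0)"
    by (simp_all add: pd1_on_indicator[OF S_open])
qed

lemma restr_on_manifold:
  assumes "w \<in> S"
  shows "restr_f a b M V k0 Phi w = a * quad_mode k0 w + b * cubic_mode k0 w"
    and "restr_g a b M V k0 Phi w = 0"
  using reduced_field[OF assms] by (simp_all add: restr_f_def restr_g_def)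

text \<open>The quadratic part of the Lyapunov coefficient vanishes: g is zero on the manifold and
  the reduced f has no mixed second derivative at the origin.\<close>
lemma lyap1_eq_third_derivatives:
  "lyap1 (restr_f a b M V k0 Phi) (restr_g a b M V k0 Phi)
     = (a * Du (Du (Du (quad_mode k0))) (0, 0) + b * Du (Du (Du (cubic_mode k0))) (0, 0)
        + a * Du (Dp (Dp (quad_mode k0))) (0, 0) + b * Du (Dp (Dp (cubic_mode k0))) (0, 0)) / 16"
proof -
  let ?f = "restr_f a b M V k0 Phi" and ?g = "restr_g a b M V k0 Phi"
  have f: "\<forall>v\<in>S. ?f v = a * quad_mode k0 v + b * cubic_mode k0 v"
    and g: "\<forall>v\<in>S. ?g v = 0"
    by (simp_all add: restr_on_manifold)
  note D1 = pd1_eq_pd1_on[OF S_open] and D2 = pd2_eq_pd2_on[OF S_open]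
  show ?thesis
    unfolding lyap1_def Let_def
    using D1[OF D1[OF D1[OF f]]] D1[OF D2[OF D2[OF f]]] D1[OF D1[OF f]] D2[OF D2[OF f]] D1[OF D2[OF f]]
      D1[OF D1[OF D2[OF g]]] D2[OF D2[OF D2[OF g]]] D1[OF D1[OF g]] D2[OF D2[OF g]] D1[OF D2[OF g]]
      origin_in_S
    by (simp add: pd_on_rules Ck_rules S_open Ck_quad_mode Ck_cubic_mode
        quad_mode_origin cubic_mode_origin)
qed

lemma third_derivatives_at_origin:
  "Du (Du (Du (quad_mode k0))) (0, 0) = 6 * (\<Sum>\<kappa>\<in>UNIV. quad_coeff \<kappa> * Du (Du (u_mode \<kappa>)) (0, 0))"
  "Du (Dp (Dp (quad_mode k0))) (0, 0) = 2 * (\<Sum>\<kappa>\<in>UNIV. quad_coeff \<kappa> * Dp (Dp (u_mode \<kappa>)) (0, 0))"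
  "Du (Du (Du (cubic_mode k0))) (0, 0) = 6 * (\<Sum>\<phi>\<in>UNIV. (V $ \<phi> $ k0) ^ 4)"
  "Du (Dp (Dp (cubic_mode k0))) (0, 0) = 0"
proof -
  note rules = pd_on_rules Ck_rules S_open origin_in_S Ck_x_comp comp_origin pd_comp_origin
  have modal: "Du (Du (x_comp \<phi>)) (0, 0) = (\<Sum>\<kappa>\<in>UNIV. V $ \<phi> $ \<kappa> * Du (Du (u_mode \<kappa>)) (0, 0))"
    "Dp (Dp (x_comp \<phi>)) (0, 0) = (\<Sum>\<kappa>\<in>UNIV. V $ \<phi> $ \<kappa> * Dp (Dp (u_mode \<kappa>)) (0, 0))" for \<phi>
    by (subst x_comp_modal_expansion, simp add: rules Ck_u_mode)+
  have swap: "(\<Sum>\<phi>\<in>UNIV. V $ \<phi> $ k0 * (V $ \<phi> $ k0 * (\<Sum>\<kappa>\<in>UNIV. V $ \<phi> $ \<kappa> * h \<kappa>)))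
      = (\<Sum>\<kappa>\<in>UNIV. quad_coeff \<kappa> * h \<kappa>)" for h
    unfolding quad_coeff_def sum_distrib_left sum_distrib_right
    by (subst sum.swap) (simp add: algebra_simps)
  show "Du (Du (Du (quad_mode k0))) (0, 0) = 6 * (\<Sum>\<kappa>\<in>UNIV. quad_coeff \<kappa> * Du (Du (u_mode \<kappa>)) (0, 0))"
    by (simp add: quad_mode_def[abs_def] rules modal swap[symmetric] sum_distrib_left algebra_simps)
  show "Du (Dp (Dp (quad_mode k0))) (0, 0) = 2 * (\<Sum>\<kappa>\<in>UNIV. quad_coeff \<kappa> * Dp (Dp (u_mode \<kappa>)) (0, 0))"
    by (simp add: quad_mode_def[abs_def] rules modal swap[symmetric] sum_distrib_left algebra_simps)
  show "Du (Du (Du (cubic_mode k0))) (0, 0) = 6 * (\<Sum>\<phi>\<in>UNIV. (V $ \<phi> $ k0) ^ 4)"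
    by (simp add: cubic_mode_def[abs_def] rules sum_distrib_left algebra_simps power4_eq_xxxx)
  show "Du (Dp (Dp (cubic_mode k0))) (0, 0) = 0"
    by (simp add: cubic_mode_def[abs_def] rules)
qed

lemma lyap1_center_manifold:
  "lyap1 (restr_f a b M V k0 Phi) (restr_g a b M V k0 Phi) =
     3/8 * b * (\<Sum>\<phi>\<in>UNIV. (V $ \<phi> $ k0)^4)
     + a^2 * (\<Sum>k\<in>UNIV - {k0}. (\<Sum>\<phi>\<in>UNIV. V $ \<phi> $ k * (V $ \<phi> $ k0)^2)^2 * (- lam k) / (4 * (lam k)^2 + 9))"
proof -
  have mode_term: "quad_coeff \<kappa> * (6 * Du (Du (u_mode \<kappa>)) (0, 0) + 2 * Dp (Dp (u_mode \<kappa>)) (0, 0))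
      = (if \<kappa> = k0 then 0 else 16 * a * (quad_coeff \<kappa>)\<^sup>2 * (- lam \<kappa>) / (4 * (lam \<kappa>)\<^sup>2 + 9))" for \<kappa>
  proof (cases "\<kappa> = k0")
    case True
    then show ?thesis by (simp add: second_order_u_mode_k0)
  next
    case False
    have "4 * (lam \<kappa>)\<^sup>2 + 9 \<noteq> 0"
      by (simp add: add_nonneg_eq_0_iff)
    then have "Du (Du (u_mode \<kappa>)) (0, 0) = - 4 * lam \<kappa> * a * quad_coeff \<kappa> / (4 * (lam \<kappa>)\<^sup>2 + 9)"
      using second_order_u_mode(2)[OF False] by (simp add: field_simps)
    then show ?thesis
      using second_order_u_mode(1)[OF False] False \<open>4 * (lam \<kappa>)\<^sup>2 + 9 \<noteq> 0\<close>
      by (simp add: field_simps power2_eq_square)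
  qed
  have "lyap1 (restr_f a b M V k0 Phi) (restr_g a b M V k0 Phi) = 3/8 * b * (\<Sum>\<phi>\<in>UNIV. (V $ \<phi> $ k0)^4)
     + a / 16 * (\<Sum>\<kappa>\<in>UNIV. quad_coeff \<kappa> * (6 * Du (Du (u_mode \<kappa>)) (0, 0) + 2 * Dp (Dp (u_mode \<kappa>)) (0, 0)))"
    by (simp add: lyap1_eq_third_derivatives third_derivatives_at_origin algebra_simps sum.distrib
        sum_distrib_left)
  also have "\<dots> = 3/8 * b * (\<Sum>\<phi>\<in>UNIV. (V $ \<phi> $ k0)^4)
     + a / 16 * (\<Sum>\<kappa>\<in>UNIV - {k0}. 16 * a * (quad_coeff \<kappa>)\<^sup>2 * (- lam \<kappa>) / (4 * (lam \<kappa>)\<^sup>2 + 9))"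
    unfolding mode_term by (simp add: sum.If_cases Diff_eq Compl_eq)
  also have "\<dots> = 3/8 * b * (\<Sum>\<phi>\<in>UNIV. (V $ \<phi> $ k0)^4)
     + a^2 * (\<Sum>k\<in>UNIV - {k0}. (\<Sum>\<phi>\<in>UNIV. V $ \<phi> $ k * (V $ \<phi> $ k0)^2)^2 * (- lam k) / (4 * (lam k)^2 + 9))"
    by (simp add: quad_coeff_def sum_distrib_left power2_eq_square algebra_simps)
  finally show ?thesis .
qed

end

section \<open>Sub- and supercriticality\<close>

lemma sum_power4_unit_column_pos:
  fixes V :: "real^'n^'n"
  assumes "transpose V ** V = mat 1"
  shows "(\<Sum>\<phi>\<in>UNIV. (V $ \<phi> $ k) ^ 4) > 0"
proof -
  have "(\<Sum>\<phi>\<in>UNIV. V $ \<phi> $ k * V $ \<phi> $ k) = 1"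
    using orthonormal_columns[OF assms, of k k] by simp
  then obtain \<phi> where "V $ \<phi> $ k \<noteq> 0"
    by (metis (no_types, lifting) mult_zero_left sum.neutral zero_neq_one)
  then show ?thesis
    by (intro sum_pos2[of UNIV \<phi>]) simp_all
qed

lemma criticality_threshold:
  fixes a b S4 D :: real
  assumes S4: "S4 > 0" and D: "D \<ge> 0"
  defines "L \<equiv> 3/8 * b * S4 + a^2 * D" and "\<gamma> \<equiv> sqrt (3/8 * S4 / D)"
  shows "b < 0 \<Longrightarrow> D > 0 \<Longrightarrow> \<gamma> * sqrt (- b) < \<bar>a\<bar> \<Longrightarrow> L > 0"
    and "b < 0 \<Longrightarrow> D > 0 \<Longrightarrow> \<bar>a\<bar> < \<gamma> * sqrt (- b) \<Longrightarrow> L < 0"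
    and "b > 0 \<Longrightarrow> L > 0"
proof -
  assume b: "b < 0" and D_pos: "D > 0"
  define t where "t = 3/8 * S4 / D * (- b)"
  have \<gamma>_t: "\<gamma> * sqrt (- b) = sqrt t"
    unfolding t_def \<gamma>_def by (rule real_sqrt_mult[symmetric])
  have t_D: "t * D = 3/8 * S4 * (- b)"
    unfolding t_def using D_pos by simp
  have "sqrt t < \<bar>a\<bar> \<longleftrightarrow> t < a^2" "\<bar>a\<bar> < sqrt t \<longleftrightarrow> a^2 < t"
    by (simp_all only: real_sqrt_abs[symmetric] real_sqrt_less_iff)
  then show "\<gamma> * sqrt (- b) < \<bar>a\<bar> \<Longrightarrow> L > 0" "\<bar>a\<bar> < \<gamma> * sqrt (- b) \<Longrightarrow> L < 0"
    using \<gamma>_t t_D D_pos mult_strict_right_mono[of t "a^2" D] mult_strict_right_mono[of "a^2" t D]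
    by (auto simp: L_def algebra_simps)
next
  assume "b > 0"
  then show "L > 0"
    using S4 D by (simp add: L_def add_pos_nonneg)
qed

theorem mainTheorem1:
  fixes a b :: real and M V :: "real^'n^'n" and lam :: "'n \<Rightarrow> real" and k0 :: 'n
  assumes N2: "CARD('n) \<ge> 2"
    and symM: "transpose M = M"
    and orthV: "transpose V ** V = mat 1"
    and eig: "\<And>k. M *v column k V = lam k *\<^sub>R column k V"
    and lam1: "lam k0 = 0"
    and lamk: "\<And>k. k \<noteq> k0 \<Longrightarrow> lam k < 0"
  defines "F \<equiv> coupled_field a b M"
    and "L \<equiv> 3/8 * b * (\<Sum>\<phi>\<in>UNIV. (V $ \<phi> $ k0)^4)
              + a^2 * (\<Sum>k\<in>UNIV - {k0}. (\<Sum>\<phi>\<in>UNIV. V $ \<phi> $ k * (V $ \<phi> $ k0)^2)^2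
                                         * (- lam k) / (4 * (lam k)^2 + 9))"
    and "D \<equiv> (\<Sum>k\<in>UNIV - {k0}. (\<Sum>\<phi>\<in>UNIV. V $ \<phi> $ k * (V $ \<phi> $ k0)^2)^2
                                         * (- lam k) / (4 * (lam k)^2 + 9))"
    and "\<gamma> \<equiv> sqrt (3/8 * (\<Sum>\<phi>\<in>UNIV. (V $ \<phi> $ k0)^4)
              / (\<Sum>k\<in>UNIV - {k0}. (\<Sum>\<phi>\<in>UNIV. V $ \<phi> $ k * (V $ \<phi> $ k0)^2)^2
                                         * (- lam k) / (4 * (lam k)^2 + 9)))"
  shows
    "F 0 = 0 \<and> F differentiable (at 0) \<and>
     order \<i> (charpoly (jacobian F (at 0))) = 1 \<and>
     order (- \<i>) (charpoly (jacobian F (at 0))) = 1 \<and>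
     (\<forall>\<mu>. poly (charpoly (jacobian F (at 0))) \<mu> = 0 \<longrightarrow> \<mu> = \<i> \<or> \<mu> = - \<i> \<or> Re \<mu> < 0) \<and>
     (\<forall>S Phi. local_center_manifold F (coord_u V k0) (coord_p V k0) (center_e1 V k0) (center_e2 V k0) S Phi \<longrightarrow>
        (let l1 = lyap1 (restr_f a b M V k0 Phi) (restr_g a b M V k0 Phi) in
           sgn l1 = sgn L \<and>
           (b < 0 \<and> D > 0 \<longrightarrow> (\<bar>a\<bar> > \<gamma> * sqrt (- b) \<longrightarrow> l1 > 0) \<and> (\<bar>a\<bar> < \<gamma> * sqrt (- b) \<longrightarrow> l1 < 0)) \<and>
           (b > 0 \<longrightarrow> l1 > 0)))"
proof -
  have l1: "lyap1 (restr_f a b M V k0 Phi) (restr_g a b M V k0 Phi) = L"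
    if "local_center_manifold F (coord_u V k0) (coord_p V k0) (center_e1 V k0) (center_e2 V k0) S Phi"
    for S Phi
  proof -
    interpret coupled_center_manifold a b M V lam k0 S Phi
      using symM orthV eig lam1 that by unfold_locales (simp_all add: F_def)
    show ?thesis
      unfolding L_def by (rule lyap1_center_manifold)
  qed
  have D: "D \<ge> 0"
    unfolding D_def
    by (intro sum_nonneg divide_nonneg_pos mult_nonneg_nonneg)
       (auto intro: less_imp_le[OF lamk] add_nonneg_pos)
  have L: "L = 3/8 * b * (\<Sum>\<phi>\<in>UNIV. (V $ \<phi> $ k0)^4) + a^2 * D"
    and \<gamma>: "\<gamma> = sqrt (3/8 * (\<Sum>\<phi>\<in>UNIV. (V $ \<phi> $ k0)^4) / D)"
    by (simp_all only: L_def D_def \<gamma>_def)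
  note threshold =
    criticality_threshold[OF sum_power4_unit_column_pos[OF orthV, of k0] D, where a = a and b = b]
  have "F differentiable (at 0)"
    unfolding F_def differentiable_def using coupled_field_has_derivative by blast
  then show ?thesis
    using coupled_field_spectrum[OF orthV eig lam1 lamk] l1 threshold
    unfolding F_def L \<gamma> by (auto simp: coupled_field_zero Let_def)
qed

end
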